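(* Fix $t\in C$ with $t\neq0,\infty$, and let $u\colon M\to X_t=\mathbf P\times\mathbf P$ send each curve of $M$ to its intersection point with $X_t$. In coordinates, $$u(d,a)=\Big(\frac{d-at}{1+a\bar dt},\ \frac{\bar ad-t}{\bar a+\bar dt}\Big).$$ Then: (i) $u$ is surjective; (ii) $u(K)=\Delta_t$ and $u^{-1}(\Delta_t)=K$; (iii) $u$ maps each of $M^+$ and $M^-$ diffeomorphically onto $X_t\setminus\Delta_t$.
   Context: Let $X=\mathbf P^1\times\mathbf P^1\times\mathbf P^1$ with affine coordinates $(x,y,t)$. The third factor is $C$, $X_t$ is the fibre over $t\in C$, and $\Delta_t=\{x=y\}\subset X_t$ is its diagonal. For $d\in\mathbf C$ and $a\in\mathbf C^*$, let $L_{d,a}$ be the curve $x=\frac{d-at}{1+a\bar dt}$, $y=\frac{\bar ad-t}{\bar a+\bar dt}$. For $d=\infty$ and $a\in\mathbf C^*$, let $L_{\infty,a}$ be the curve $x=\frac1{at}$, $y=\frac{\bar a}{t}$. For $d\in\mathbf C\cup\{\infty\}$, let $L_{d,0}$ be the curve $x=d$, $y=-1/\bar d$ (with $-1/\bar0=\infty$, $-1/\bar\infty=0$). Put $C_0=\{d\}\times\mathbf P\times\{0\}$, $C_\infty=\mathbf P\times\{-1/\bar d\}\times\{\infty\}$, $C_0'=\mathbf P\times\{d\}\times\{0\}$ and $C_\infty'=\{-1/\bar d\}\times\mathbf P\times\{\infty\}$. The parameter spaces are: - $M^+$: the family of curves $L_{d,a}$ with $d\in\mathbf C\cup\{\infty\}$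 and $0<|a|<1$, together with their limits $L_{d,0}+C_0+C_\infty$ (parameter $a=0$); - $M^-$: the family of curves $L_{d,a}$ with $|a|>1$, together with their limits $L_{-1/\bar d,0}+C_0'+C_\infty'$ (parameter $a=\infty$); - $K$: the family of curves $L_{d,a}$ with $|a|=1$; - $M=M^+\cup K\cup M^-$. $M$ is a compact connected smooth real $4$-manifold, an $S^2$-bundle over $\mathbf P$ via $d$. It is a connected component of the real locus of the Hilbert scheme of degree-$(1,1,1)$ curves in $X$ meeting the diagonals $\Delta_0$ and $\Delta_\infty$. Locally, $(d,a),(1/d,a),(d,1/a),(1/d,1/a)$ serve as complex coordinates. The point $u(d,0)=(d,-1/\bar d)$ and the point $u(d,\infty)=(-1/\bar d,d)$ are the intersection points of the respective limit curves with $X_t$. *)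

theory Defs
  imports "HOL-Analysis.Analysis"
begin

text \<open>The Riemann sphere P = C \<union> {\<infinity>}: None is the point at infinity.\<close>
type_synonym sphere = "complex option"

text \<open>n/m on the sphere (used only where n and m do not vanish simultaneously).\<close>
definition pfrac :: "complex \<Rightarrow> complex \<Rightarrow> sphere" where
  "pfrac n m = (if m = 0 then None else Some (n / m))"

definition antip :: "sphere \<Rightarrow> sphere" where
  "antip p = (case p of None \<Rightarrow> Some 0 | Some z \<Rightarrow> (if z = 0 then None else Some (- 1 / cnj z)))"

definition pinv :: "sphere \<Rightarrow> complex" where
  "pinv p = (case p of None \<Rightarrow> 0 | Some z \<Rightarrow> 1 / z)"

text \<open>Parameter space M: pairs (d,a) with d, a in the sphere.  a = 0 encodes the limit curves of
  M+, a = \<infinity> the limit curves of M-.\<close>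
type_synonym param = "sphere \<times> sphere"

definition Mplus :: "param set" where
  "Mplus = {(d, Some a) | d a. cmod a < 1}"

definition Mminus :: "param set" where
  "Mminus = {(d, None) | d. True} \<union> {(d, Some a) | d a. cmod a > 1}"

definition Kset :: "param set" where
  "Kset = {(d, Some a) | d a. cmod a = 1}"

definition Diag :: "(sphere \<times> sphere) set" where
  "Diag = {(z, z) | z. True}"

definition uM :: "complex \<Rightarrow> param \<Rightarrow> sphere \<times> sphere" where
  "uM t p = (case p of
      (d, None) \<Rightarrow> (antip d, d)
    | (d, Some a) \<Rightarrow>
        (if a = 0 then (d, antip d)
         else (case d of
                 None \<Rightarrow> (Some (1 / (a * t)), Some (cnj a / t))
               | Some d' \<Rightarrow> (pfrac (d' - a * t) (1 + a * cnj d' * t),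
                             pfrac (cnj a * d' - t) (cnj a + cnj d' * t)))))"

primrec Ck :: "nat \<Rightarrow> 'a::real_normed_vector set \<Rightarrow> ('a \<Rightarrow> 'b::real_normed_vector) \<Rightarrow> bool" where
  "Ck 0 S f = continuous_on S f"
| "Ck (Suc k) S f = (f differentiable_on S \<and>
      (\<forall>v. Ck k S (\<lambda>x. frechet_derivative f (at x) v)))"

definition Cinf_on :: "'a::real_normed_vector set \<Rightarrow> ('a \<Rightarrow> 'b::real_normed_vector) \<Rightarrow> bool" where
  "Cinf_on S f \<longleftrightarrow> open S \<and> (\<forall>k. Ck k S f)"

text \<open>A chart is a pair (U, \<phi>) with \<phi> injective on U with open image; an atlas is a set of charts.
  A map f defined on A is smooth if in all pairs of charts it is C^\<infinity> on an open set.\<close>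
definition smooth_map ::
  "('m set \<times> ('m \<Rightarrow> 'v::real_normed_vector)) set \<Rightarrow> ('n set \<times> ('n \<Rightarrow> 'w::real_normed_vector)) set
   \<Rightarrow> 'm set \<Rightarrow> ('m \<Rightarrow> 'n) \<Rightarrow> bool" where
  "smooth_map AM AN A f \<longleftrightarrow>
     (\<forall>(U, \<phi>) \<in> AM. \<forall>(V, \<psi>) \<in> AN.
        Cinf_on (\<phi> ` (A \<inter> U \<inter> f -` V)) (\<psi> \<circ> f \<circ> inv_into U \<phi>))"

definition diffeo_onto ::
  "('m set \<times> ('m \<Rightarrow> 'v::real_normed_vector)) set \<Rightarrow> ('n set \<times> ('n \<Rightarrow> 'w::real_normed_vector)) set
   \<Rightarrow> 'm set \<Rightarrow> 'n set \<Rightarrow> ('m \<Rightarrow> 'n) \<Rightarrow> bool" where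
  "diffeo_onto AM AN A B f \<longleftrightarrow>
     bij_betw f A B \<and> smooth_map AM AN A f \<and> smooth_map AN AM B (inv_into A f)"

definition X_atlas :: "((sphere \<times> sphere) set \<times> (sphere \<times> sphere \<Rightarrow> complex \<times> complex)) set" where
  "X_atlas =
    {({(Some x, Some y) | x y. True}, \<lambda>(p, q). (the p, the q)),
     ({(p, Some y) | p y. p \<noteq> Some 0}, \<lambda>(p, q). (pinv p, the q)),
     ({(Some x, q) | x q. q \<noteq> Some 0}, \<lambda>(p, q). (the p, pinv q)),
     ({(p, q) | p q. p \<noteq> Some 0 \<and> q \<noteq> Some 0}, \<lambda>(p, q). (pinv p, pinv q))}"

text \<open>Fibre coordinate of M near d = \<infinity>: b = a * conj d / d (and b = a over d = \<infinity>), which is the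
  coordinate making the family of curves (and hence u) continuous across d = \<infinity>.\<close>
definition twist :: "sphere \<Rightarrow> complex" where
  "twist d = (case d of None \<Rightarrow> 1 | Some z \<Rightarrow> cnj z / z)"

definition M_atlas :: "(param set \<times> (param \<Rightarrow> complex \<times> complex)) set" where
  "M_atlas =
    {({(Some d, Some a) | d a. True}, \<lambda>(p, q). (the p, the q)),
     ({(Some d, q) | d q. q \<noteq> Some 0}, \<lambda>(p, q). (the p, pinv q)),
     ({(p, Some a) | p a. p \<noteq> Some 0}, \<lambda>(p, q). (pinv p, the q * twist p)),
     ({(p, q) | p q. p \<noteq> Some 0 \<and> q \<noteq> Some 0}, \<lambda>(p, q). (pinv p, pinv q / twist p))}"

end

(* In homogeneous coordinates u(d, a) = ([Q x0], [Q y0]), where x0 = (-a t, 1) and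
   y0 = (-t, cnj a) represent the intersection point for d = 0 and Q is a multiple of a unitary
   matrix moving 0 to d.  Such matrices scale norms, Hermitian products and determinants by the
   same factor, and det (x0, y0) = t (1 - |a|^2).  Hence u(d, a) lies on the diagonal exactly
   when |a| = 1, and comparing these invariants for two preimages of a point shows that u is
   injective on M+.  A preimage of (x, y), x \<noteq> y, is obtained by choosing |a| from the angle
   between x and y and then rotating.  The inversion a \<mapsto> 1 / cnj a exchanges M+ and M- and
   swaps the two factors of X_t.

   In every pair of charts u is a quotient of polynomials in the coordinates and their
   conjugates.  Its inverse is C^\<infinity> by invariance of domain together with an explicit C^\<infinity>
   right inverse of the derivative; this right inverse is computed in one chart of M and carried
   to the other three by the symmetries d \<mapsto> 1/d, a \<mapsto> 1 / cnj a of the atlas. *)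

theory Submission
  imports Defs
begin

section \<open>C^k calculus\<close>

lemma Ck_Suc_imp_Ck: "Ck (Suc k) S f \<Longrightarrow> Ck k S f"
  by (induction k arbitrary: f) (simp_all add: differentiable_imp_continuous_on)

lemma Ck_subset: "Ck k T f \<Longrightarrow> S \<subseteq> T \<Longrightarrow> Ck k S f"
  by (induction k arbitrary: f) (auto intro: continuous_on_subset differentiable_on_subset)

lemma Cinf_on_UNIV_imp_Ck: "Cinf_on UNIV f \<Longrightarrow> Ck k S f"
  unfolding Cinf_on_def using Ck_subset by blast

lemma Ck_cong:
  assumes "open S" "Ck k S f" "\<And>x. x \<in> S \<Longrightarrow> f x = g x"
  shows "Ck k S g"
  using assms(2,3)
proof (induction k arbitrary: f g)
  case 0
  then show ?case using continuous_on_cong by (metis Ck.simps(1))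
next
  case (Suc k)
  have df: "f differentiable at x" if "x \<in> S" for x
    using Suc.prems(1) that assms(1) by (simp add: differentiable_on_eq_differentiable_at)
  have "g differentiable at x" if "x \<in> S" for x
    using df[OF that] assms(1) that Suc.prems(2)
    by (meson differentiable_def has_derivative_transform_within_open)
  then have "g differentiable_on S"
    using assms(1) by (simp add: differentiable_on_eq_differentiable_at)
  moreover have "frechet_derivative f (at x) = frechet_derivative g (at x)" if "x \<in> S" for x
    by (rule frechet_derivative_transform_within_open[OF df[OF that] assms(1) that Suc.prems(2)])
  ultimately show ?case
    using Suc.IH[of "\<lambda>x. frechet_derivative f (at x) _"] Suc.prems by simp
qed

lemma Ck_SucI:
  assumes "open S" "\<And>x. x \<in> S \<Longrightarrow> (f has_derivative f' x) (at x)" "\<And>v. Ck k S (\<lambda>x. f' x v)"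
  shows "Ck (Suc k) S f"
proof (simp, intro conjI allI)
  show "f differentiable_on S"
    using assms(2) by (meson differentiable_at_withinI differentiable_def differentiable_on_def)
  show "Ck k S (\<lambda>x. frechet_derivative f (at x) v)" for v
    by (rule Ck_cong[OF assms(1) assms(3)[of v]]) (simp add: frechet_derivative_at[OF assms(2)])
qed

lemma Ck_Suc_has_derivative:
  "open S \<Longrightarrow> Ck (Suc k) S f \<Longrightarrow> x \<in> S \<Longrightarrow> (f has_derivative frechet_derivative f (at x)) (at x)"
  by (simp add: differentiable_on_eq_differentiable_at frechet_derivative_works)

lemma Ck_const: "open S \<Longrightarrow> Ck k S (\<lambda>x. c)"
proof (induction k arbitrary: c)
  case (Suc k)
  show ?case by (rule Ck_SucI[where f'="\<lambda>x v. 0"]) (use Suc in auto)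
qed simp

lemma Ck_linear:
  assumes "bounded_linear L" "open S"
  shows "Ck k S L"
proof (cases k)
  case (Suc j)
  show ?thesis unfolding Suc
    by (rule Ck_SucI[OF assms(2), where f'="\<lambda>x v. L v"])
       (use assms in \<open>auto intro: bounded_linear_imp_has_derivative Ck_const\<close>)
qed (use assms in \<open>simp add: linear_continuous_on\<close>)

lemma Ck_linear_comp:
  assumes "bounded_linear L" "open S" "Ck k S f"
  shows "Ck k S (\<lambda>x. L (f x))"
  using assms(3)
proof (induction k arbitrary: f)
  case 0
  then show ?case by (simp add: bounded_linear.continuous_on[OF assms(1)])
next
  case (Suc k)
  show ?case
  proof (rule Ck_SucI[OF assms(2), where f'="\<lambda>x v. L (frechet_derivative f (at x) v)"])
    show "((\<lambda>x. L (f x)) has_derivative (\<lambda>v. L (frechet_derivative f (at x) v))) (at x)"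
      if "x \<in> S" for x
      using Ck_Suc_has_derivative[OF assms(2) Suc.prems that]
        bounded_linear.has_derivative[OF assms(1)] by blast
  qed (use Suc in simp)
qed

lemma Ck_add:
  assumes "open S" "Ck k S f" "Ck k S g"
  shows "Ck k S (\<lambda>x. f x + g x)"
  using assms(2,3)
proof (induction k arbitrary: f g)
  case 0
  then show ?case by (simp add: continuous_on_add)
next
  case (Suc k)
  let ?f' = "\<lambda>x. frechet_derivative f (at x)" and ?g' = "\<lambda>x. frechet_derivative g (at x)"
  show ?case
  proof (rule Ck_SucI[OF assms(1), where f'="\<lambda>x v. ?f' x v + ?g' x v"])
    show "((\<lambda>x. f x + g x) has_derivative (\<lambda>v. ?f' x v + ?g' x v)) (at x)" if "x \<in> S" for x
      using Ck_Suc_has_derivative[OF assms(1) Suc.prems(1) that]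
        Ck_Suc_has_derivative[OF assms(1) Suc.prems(2) that] by (rule has_derivative_add)
  qed (use Suc in simp)
qed

lemma Ck_Pair:
  assumes "open S" "Ck k S f" "Ck k S g"
  shows "Ck k S (\<lambda>x. (f x, g x))"
  using assms(2,3)
proof (induction k arbitrary: f g)
  case 0
  then show ?case by (simp add: continuous_on_Pair)
next
  case (Suc k)
  let ?f' = "\<lambda>x. frechet_derivative f (at x)" and ?g' = "\<lambda>x. frechet_derivative g (at x)"
  show ?case
  proof (rule Ck_SucI[OF assms(1), where f'="\<lambda>x v. (?f' x v, ?g' x v)"])
    show "((\<lambda>x. (f x, g x)) has_derivative (\<lambda>v. (?f' x v, ?g' x v))) (at x)" if "x \<in> S" for x
      using Ck_Suc_has_derivative[OF assms(1) Suc.prems(1) that]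
        Ck_Suc_has_derivative[OF assms(1) Suc.prems(2) that] by (rule has_derivative_Pair)
  qed (use Suc in simp)
qed

lemma Ck_bilinear:
  assumes "bounded_bilinear m" "open S" "Ck k S f" "Ck k S g"
  shows "Ck k S (\<lambda>x. m (f x) (g x))"
  using assms(3,4)
proof (induction k arbitrary: f g)
  case 0
  then show ?case by (simp add: bounded_bilinear.continuous_on[OF assms(1)])
next
  case (Suc k)
  let ?f' = "\<lambda>x. frechet_derivative f (at x)" and ?g' = "\<lambda>x. frechet_derivative g (at x)"
  show ?case
  proof (rule Ck_SucI[OF assms(2), where f'="\<lambda>x v. m (f x) (?g' x v) + m (?f' x v) (g x)"])
    show "((\<lambda>x. m (f x) (g x)) has_derivative (\<lambda>v. m (f x) (?g' x v) + m (?f' x v) (g x))) (at x)"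
      if "x \<in> S" for x
      using bounded_bilinear.FDERIV[OF assms(1) Ck_Suc_has_derivative[OF assms(2) Suc.prems(1) that]
          Ck_Suc_has_derivative[OF assms(2) Suc.prems(2) that]] .
    show "Ck k S (\<lambda>x. m (f x) (?g' x v) + m (?f' x v) (g x))" for v
      using Suc.prems by (intro Ck_add assms(2) Suc.IH) (simp_all add: Ck_Suc_imp_Ck)
  qed
qed

lemma Ck_sum:
  assumes "open S" "finite I" "\<And>i. i \<in> I \<Longrightarrow> Ck k S (f i)"
  shows "Ck k S (\<lambda>x. \<Sum>i\<in>I. f i x)"
  using assms(2,3) by (induction I rule: finite_induct) (simp_all add: Ck_const Ck_add assms(1))

lemma linear_eq_sum_Basis:
  fixes L :: "'a::euclidean_space \<Rightarrow> 'b::real_vector"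
  assumes "linear L"
  shows "L w = (\<Sum>b\<in>Basis. (w \<bullet> b) *\<^sub>R L b)"
proof -
  have "L w = L (\<Sum>b\<in>Basis. (w \<bullet> b) *\<^sub>R b)" by (simp add: euclidean_representation)
  then show ?thesis by (simp add: linear_sum[OF assms] linear_scale[OF assms])
qed

text \<open>The derivative of the composite is expanded along a basis, so that only products of
  C^k functions occur.\<close>
lemma Ck_compose:
  fixes g :: "'b::euclidean_space \<Rightarrow> 'c::real_normed_vector"
  assumes "open S" "Cinf_on T g" "Ck k S f" "f ` S \<subseteq> T"
  shows "Ck k S (\<lambda>x. g (f x))"
  using assms(2-4)
proof (induction k arbitrary: f g)
  case 0
  then show ?case
    using continuous_on_compose2[of T g S f] by (simp add: Cinf_on_def) (metis Ck.simps(1))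
next
  case (Suc k)
  have T: "open T" and gT: "\<And>j. Ck j T g" using Suc.prems(1) by (auto simp: Cinf_on_def)
  let ?f' = "\<lambda>x. frechet_derivative f (at x)" and ?g' = "\<lambda>y. frechet_derivative g (at y)"
  have dg: "(g has_derivative ?g' y) (at y)" if "y \<in> T" for y
    using Ck_Suc_has_derivative[OF T gT that] .
  have fS: "f x \<in> T" if "x \<in> S" for x using Suc.prems(3) that by blast
  show ?case
  proof (rule Ck_SucI[OF assms(1), where f'="\<lambda>x v. ?g' (f x) (?f' x v)"])
    show "((\<lambda>x. g (f x)) has_derivative (\<lambda>v. ?g' (f x) (?f' x v))) (at x)" if "x \<in> S" for x
      using diff_chain_at[OF Ck_Suc_has_derivative[OF assms(1) Suc.prems(2) that] dg[OF fS[OF that]]]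
      by (simp add: o_def)
  next
    fix v
    have "Ck k S (\<lambda>x. ?f' x v \<bullet> b)" for b
      using Ck_linear_comp[OF bounded_linear_inner_left assms(1)] Suc.prems(2) by auto
    moreover have "Ck k S (\<lambda>x. ?g' (f x) b)" for b
    proof (rule Suc.IH[OF _ Ck_Suc_imp_Ck[OF Suc.prems(2)] Suc.prems(3)])
      have "Ck j T (\<lambda>y. ?g' y b)" for j
        using gT[of "Suc j"] by simp
      then show "Cinf_on T (\<lambda>y. ?g' y b)"
        using T by (simp add: Cinf_on_def)
    qed
    ultimately have "Ck k S (\<lambda>x. \<Sum>b\<in>Basis. (?f' x v \<bullet> b) *\<^sub>R ?g' (f x) b)"
      by (intro Ck_sum Ck_bilinear[OF bounded_bilinear_scaleR] assms(1)) auto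
    moreover have "linear (?g' (f x))" if "x \<in> S" for x
      using dg fS that has_derivative_linear by blast
    ultimately show "Ck k S (\<lambda>x. ?g' (f x) (?f' x v))"
      by (auto intro: Ck_cong[OF assms(1)] simp flip: linear_eq_sum_Basis)
  qed
qed

lemma Cinf_on_inverse: "Cinf_on (- {0}) (inverse :: complex \<Rightarrow> complex)"
  unfolding Cinf_on_def
proof (intro conjI allI)
  show "Ck k (- {0}) (inverse :: complex \<Rightarrow> complex)" for k
  proof (induction k)
    case (Suc k)
    show ?case
    proof (rule Ck_SucI[where f'="\<lambda>x h. - (inverse x * h * inverse x)"])
      show "(inverse has_derivative (\<lambda>h. - (inverse x * h * inverse x))) (at x)"
        if "x \<in> - {0}" for x :: complex
        using that by (intro has_derivative_inverse') auto
      show "Ck k (- {0}) (\<lambda>x. - (inverse x * v * inverse x))" for v :: complex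
        by (intro Ck_linear_comp[OF bounded_linear_minus[OF bounded_linear_ident]]
              Ck_bilinear[OF bounded_bilinear_mult] Ck_const Suc) auto
    qed auto
  qed (simp add: continuous_on_inverse)
qed auto

lemma Ck_ident: "open S \<Longrightarrow> Ck k S (\<lambda>z. z)"
  by (rule Ck_linear[OF bounded_linear_ident])

lemma Ck_fst: "open S \<Longrightarrow> Ck k S f \<Longrightarrow> Ck k S (\<lambda>z. fst (f z))"
  by (rule Ck_linear_comp[OF bounded_linear_fst])

lemma Ck_snd: "open S \<Longrightarrow> Ck k S f \<Longrightarrow> Ck k S (\<lambda>z. snd (f z))"
  by (rule Ck_linear_comp[OF bounded_linear_snd])

lemma Ck_cnj: "open S \<Longrightarrow> Ck k S f \<Longrightarrow> Ck k S (\<lambda>z. cnj (f z))"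
  by (rule Ck_linear_comp[OF bounded_linear_cnj])

lemma Ck_uminus: "open S \<Longrightarrow> Ck k S g \<Longrightarrow> Ck k S (\<lambda>z. - g z)"
  by (rule Ck_linear_comp[OF bounded_linear_minus[OF bounded_linear_ident]])

lemma Ck_diff: "open S \<Longrightarrow> Ck k S f \<Longrightarrow> Ck k S g \<Longrightarrow> Ck k S (\<lambda>z. f z - g z)"
  unfolding diff_conv_add_uminus by (intro Ck_add Ck_uminus)

lemma Ck_mult:
  "open S \<Longrightarrow> Ck k S f \<Longrightarrow> Ck k S g \<Longrightarrow> Ck k S (\<lambda>z. f z * g z :: 'a::real_normed_algebra)"
  by (rule Ck_bilinear[OF bounded_bilinear_mult])

lemma Ck_power:
  "open S \<Longrightarrow> Ck k S f \<Longrightarrow> Ck k S (\<lambda>z. f z ^ n :: 'a::{real_normed_algebra, monoid_mult})"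
  by (induction n) (simp_all add: Ck_const Ck_mult)

lemma Ck_inverse:
  fixes f :: "'a::real_normed_vector \<Rightarrow> complex"
  assumes "open S" "Ck k S f" "\<And>x. x \<in> S \<Longrightarrow> f x \<noteq> 0"
  shows "Ck k S (\<lambda>z. inverse (f z))"
  by (rule Ck_compose[OF assms(1) Cinf_on_inverse assms(2)]) (use assms(3) in auto)

lemma Ck_divide:
  fixes f :: "'a::real_normed_vector \<Rightarrow> complex"
  assumes "open S" "Ck k S f" "Ck k S g" "\<And>x. x \<in> S \<Longrightarrow> g x \<noteq> 0"
  shows "Ck k S (\<lambda>z. f z / g z)"
  using Ck_mult[OF assms(1,2) Ck_inverse[OF assms(1,3,4)]] by (simp add: divide_inverse)

lemmas Ck_intros = Ck_const Ck_ident Ck_fst Ck_snd Ck_cnj Ck_add Ck_uminus Ck_diff Ck_mult Ck_power Ck_Pair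
  Ck_inverse Ck_divide

text \<open>Openness of the image is invariance of domain; the inverse has derivative G, which gives
  C^k by induction on k.\<close>
lemma Cinf_on_inv_into:
  fixes F :: "'a::euclidean_space \<Rightarrow> 'a"
  assumes F: "Cinf_on S F" "inj_on F S"
    and G: "\<And>x v. x \<in> S \<Longrightarrow> frechet_derivative F (at x) (G x v) = v" "\<And>v. Cinf_on S (\<lambda>x. G x v)"
  shows "Cinf_on (F ` S) (inv_into S F)"
proof -
  have S: "open S" and Fk: "\<And>k. Ck k S F" using F(1) by (auto simp: Cinf_on_def)
  have opn: "open (F ` S)"
    using invariance_of_domain[OF _ S F(2)] Fk[of 0] by simp
  let ?g = "inv_into S F"
  have gF: "?g (F x) = x" if "x \<in> S" for x using F(2) that by simp
  have "(?g has_derivative G x) (at (F x))" if "x \<in> S" for x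
    by (rule has_derivative_inverse_on[OF S Ck_Suc_has_derivative[OF S Fk] gF _ that])
       (auto simp: G(1) that)
  then have dg: "(?g has_derivative G (?g y)) (at y)" if "y \<in> F ` S" for y
    using that gF by auto
  have "Ck k (F ` S) ?g" for k
  proof (induction k)
    case 0
    have "isCont ?g y" if "y \<in> F ` S" for y using dg[OF that] has_derivative_continuous by blast
    then show ?case by (simp add: continuous_at_imp_continuous_on)
  next
    case (Suc k)
    have "Ck k (F ` S) (\<lambda>y. G (?g y) v)" for v
      by (rule Ck_compose[OF opn G(2) Suc]) (use gF in auto)
    then show ?case
      by (intro Ck_SucI[OF opn dg])
  qed
  then show ?thesis using opn by (simp add: Cinf_on_def)
qed

section \<open>Homogeneous coordinates\<close>

lemma one_plus_sq_ne_0: "1 + (a * cnj a) * (t * cnj t) \<noteq> 0"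
proof -
  have "1 + (a * cnj a) * (t * cnj t) = complex_of_real (1 + (cmod a)\<^sup>2 * (cmod t)\<^sup>2)"
    by (simp add: complex_norm_square[symmetric])
  moreover have "(0::real) < 1 + (cmod a)\<^sup>2 * (cmod t)\<^sup>2" by (simp add: add_pos_nonneg)
  ultimately show ?thesis by (metis of_real_eq_0_iff less_irrefl)
qed

lemma of_real_norm_Pair_sq:
  "(complex_of_real (norm v))\<^sup>2 = fst v * cnj (fst v) + snd v * cnj (snd v)"
proof (cases v)
  case (Pair a b)
  have "(norm v)\<^sup>2 = (cmod a)\<^sup>2 + (cmod b)\<^sup>2" by (simp add: Pair norm_Pair)
  then have "(complex_of_real (norm v))\<^sup>2 = complex_of_real ((cmod a)\<^sup>2 + (cmod b)\<^sup>2)"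
    by (metis of_real_power)
  then show ?thesis by (simp add: Pair complex_norm_square[symmetric])
qed

lemma pfrac_eq_pfrac_iff:
  "n \<noteq> 0 \<or> d \<noteq> 0 \<Longrightarrow> n' \<noteq> 0 \<or> d' \<noteq> 0 \<Longrightarrow> pfrac n d = pfrac n' d' \<longleftrightarrow> n * d' = n' * d"
  by (auto simp: pfrac_def field_simps)

definition proj :: "complex \<times> complex \<Rightarrow> sphere" where
  "proj v = pfrac (fst v) (snd v)"

definition cscale :: "complex \<Rightarrow> complex \<times> complex \<Rightarrow> complex \<times> complex" where
  "cscale c v = (c * fst v, c * snd v)"

definition lift :: "sphere \<Rightarrow> complex \<times> complex" where
  "lift p = (case p of None \<Rightarrow> (1, 0) | Some z \<Rightarrow> (z, 1))"

lemma proj_lift [simp]: "proj (lift p) = p"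
  by (cases p) (auto simp: lift_def proj_def pfrac_def)

lemma lift_nonzero: "lift p \<noteq> 0"
  by (cases p) (auto simp: lift_def zero_prod_def)

lemma proj_cscale: "c \<noteq> 0 \<Longrightarrow> v \<noteq> 0 \<Longrightarrow> proj (cscale c v) = proj v"
  by (cases v) (auto simp: proj_def cscale_def pfrac_eq_pfrac_iff zero_prod_def)

lemma proj_eq_proj_imp_cscale:
  assumes "v \<noteq> 0" "w \<noteq> 0" "proj v = proj w"
  obtains c where "c \<noteq> 0" "w = cscale c v"
proof -
  obtain x y x' y' where v: "v = (x, y)" and w: "w = (x', y')" by fastforce
  have e: "x * y' = x' * y"
    using assms pfrac_eq_pfrac_iff[of x y x' y'] by (auto simp: v w proj_def zero_prod_def)
  have nz: "x \<noteq> 0 \<or> y \<noteq> 0" and "x' \<noteq> 0 \<or> y' \<noteq> 0"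
    using assms(1,2) by (auto simp: v w zero_prod_def)
  from nz show ?thesis
  proof (elim disjE)
    assume x: "x \<noteq> 0"
    then have "x' \<noteq> 0" using e \<open>x' \<noteq> 0 \<or> y' \<noteq> 0\<close> by auto
    then show ?thesis using e x that[of "x' / x"] by (auto simp: v w cscale_def field_simps)
  next
    assume y: "y \<noteq> 0"
    then have "y' \<noteq> 0" using e \<open>x' \<noteq> 0 \<or> y' \<noteq> 0\<close> by auto
    then show ?thesis using e y that[of "y' / y"] by (auto simp: v w cscale_def field_simps)
  qed
qed

definition det2 :: "complex \<times> complex \<Rightarrow> complex \<times> complex \<Rightarrow> complex" where
  "det2 v w = fst v * snd w - snd v * fst w"

lemma proj_eq_proj_iff_det2:
  assumes "v \<noteq> 0" "w \<noteq> 0"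
  shows "proj v = proj w \<longleftrightarrow> det2 v w = 0"
proof -
  obtain x y x' y' where v: "v = (x, y)" and w: "w = (x', y')" by fastforce
  have "x \<noteq> 0 \<or> y \<noteq> 0" "x' \<noteq> 0 \<or> y' \<noteq> 0" using assms by (auto simp: v w zero_prod_def)
  then show ?thesis
    by (auto simp: v w proj_def det2_def pfrac_eq_pfrac_iff algebra_simps)
qed

definition hinner :: "complex \<times> complex \<Rightarrow> complex \<times> complex \<Rightarrow> complex" where
  "hinner v w = fst v * cnj (fst w) + snd v * cnj (snd w)"

text \<open>The matrix [[\<alpha>, \<beta>], [-cnj \<beta>, cnj \<alpha>]] for q = (\<alpha>, \<beta>), which is |q| times a unitary matrix.\<close>
definition qmat :: "complex \<times> complex \<Rightarrow> complex \<times> complex \<Rightarrow> complex \<times> complex" where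
  "qmat q v = (fst q * fst v + snd q * snd v, - cnj (snd q) * fst v + cnj (fst q) * snd v)"

lemma norm_qmat_sq: "(norm (qmat q v))\<^sup>2 = (norm q)\<^sup>2 * (norm v)\<^sup>2"
proof -
  have "complex_of_real ((norm (qmat q v))\<^sup>2) = complex_of_real ((norm q)\<^sup>2 * (norm v)\<^sup>2)"
    by (simp add: of_real_norm_Pair_sq qmat_def algebra_simps)
  then show ?thesis using of_real_eq_iff by blast
qed

lemma hinner_qmat: "hinner (qmat q v) (qmat q w) = (norm q)\<^sup>2 * hinner v w"
  by (simp add: of_real_norm_Pair_sq hinner_def qmat_def algebra_simps)

lemma det2_qmat: "det2 (qmat q v) (qmat q w) = (norm q)\<^sup>2 * det2 v w"
  by (simp add: of_real_norm_Pair_sq det2_def qmat_def algebra_simps)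

lemma qmat_adjoint: "qmat (cnj (fst q), - snd q) (qmat q v) = cscale ((norm q)\<^sup>2) v"
  by (simp add: of_real_norm_Pair_sq qmat_def cscale_def algebra_simps)

lemma qmat_cscale: "qmat q (cscale c v) = cscale c (qmat q v)"
  by (simp add: qmat_def cscale_def algebra_simps)

lemma qmat_nonzero:
  assumes "q \<noteq> 0" "v \<noteq> 0"
  shows "qmat q v \<noteq> 0"
proof
  assume 0: "qmat q v = 0"
  have "cscale ((norm q)\<^sup>2) v = qmat (cnj (fst q), - snd q) (qmat q v)"
    by (rule qmat_adjoint[symmetric])
  also have "\<dots> = qmat (cnj (fst q), - snd q) 0" by (simp only: 0)
  also have "\<dots> = 0" by (simp add: qmat_def zero_prod_def)
  finally have "cscale ((norm q)\<^sup>2) v = 0" .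
  then show False using assms by (cases v) (auto simp: cscale_def zero_prod_def)
qed

lemma norm_cscale_sq: "(norm (cscale c v))\<^sup>2 = (cmod c)\<^sup>2 * (norm v)\<^sup>2"
  by (cases v) (simp add: cscale_def norm_Pair norm_mult power_mult_distrib algebra_simps)

lemma hinner_cscale: "hinner (cscale c v) (cscale c' w) = c * cnj c' * hinner v w"
  by (simp add: hinner_def cscale_def algebra_simps)

lemma det2_cscale: "det2 (cscale c v) (cscale c' w) = c * c' * det2 v w"
  by (simp add: det2_def cscale_def algebra_simps)

text \<open>Homogeneous coordinates of u(d, a): for d = 0 the point is (-a t, -t / cnj a); the
  rotation qmat (rot d) of the sphere moving 0 to d carries it to general d.\<close>
definition base_x :: "complex \<Rightarrow> complex \<Rightarrow> complex \<times> complex" where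
  "base_x t a = (- (a * t), 1)"

definition base_y :: "complex \<Rightarrow> complex \<Rightarrow> complex \<times> complex" where
  "base_y t a = (- t, cnj a)"

definition rot :: "sphere \<Rightarrow> complex \<times> complex" where
  "rot d = (case d of None \<Rightarrow> (0, - 1) | Some z \<Rightarrow> (1, z))"

definition xvec :: "complex \<Rightarrow> sphere \<Rightarrow> complex \<Rightarrow> complex \<times> complex" where
  "xvec t d a = qmat (rot d) (base_x t a)"

definition yvec :: "complex \<Rightarrow> sphere \<Rightarrow> complex \<Rightarrow> complex \<times> complex" where
  "yvec t d a = qmat (rot d) (base_y t a)"

lemma rot_nonzero: "rot d \<noteq> 0"
  by (cases d) (auto simp: rot_def zero_prod_def)

lemma xvec_Some: "xvec t (Some z) a = (z - a * t, 1 + cnj z * a * t)"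
  and yvec_Some: "yvec t (Some z) a = (z * cnj a - t, cnj a + cnj z * t)"
  and xvec_None: "xvec t None a = (- 1, - (a * t))"
  and yvec_None: "yvec t None a = (- cnj a, - t)"
  by (simp_all add: xvec_def yvec_def qmat_def rot_def base_x_def base_y_def algebra_simps)

lemma xvec_nonzero: "xvec t d a \<noteq> 0"
  and yvec_nonzero: "t \<noteq> 0 \<Longrightarrow> yvec t d a \<noteq> 0"
proof -
  have "base_x t a \<noteq> 0" "t \<noteq> 0 \<Longrightarrow> base_y t a \<noteq> 0"
    by (simp_all add: base_x_def base_y_def zero_prod_def)
  then show "xvec t d a \<noteq> 0" "t \<noteq> 0 \<Longrightarrow> yvec t d a \<noteq> 0"
    by (simp_all add: xvec_def yvec_def qmat_nonzero rot_nonzero)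
qed

lemma uM_eq_proj:
  assumes "t \<noteq> 0"
  shows "uM t (d, Some a) = (proj (xvec t d a), proj (yvec t d a))"
  using assms
  by (cases d) (auto simp: uM_def proj_def xvec_Some yvec_Some xvec_None yvec_None pfrac_def
      antip_def field_simps)

section \<open>Bijectivity\<close>

lemma norm_xvec_sq: "(norm (xvec t d a))\<^sup>2 = (norm (rot d))\<^sup>2 * ((cmod a)\<^sup>2 * (cmod t)\<^sup>2 + 1)"
  by (simp add: xvec_def norm_qmat_sq base_x_def norm_Pair norm_mult power_mult_distrib)

lemma norm_yvec_sq: "(norm (yvec t d a))\<^sup>2 = (norm (rot d))\<^sup>2 * ((cmod t)\<^sup>2 + (cmod a)\<^sup>2)"
  by (simp add: yvec_def norm_qmat_sq base_y_def norm_Pair)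

lemma hinner_xvec_yvec: "hinner (xvec t d a) (yvec t d a) = (norm (rot d))\<^sup>2 * (a * (1 + t * cnj t))"
  unfolding xvec_def yvec_def hinner_qmat by (simp add: base_x_def base_y_def hinner_def algebra_simps)

lemma det2_xvec_yvec: "det2 (xvec t d a) (yvec t d a) = (norm (rot d))\<^sup>2 * (t * (1 - a * cnj a))"
  unfolding xvec_def yvec_def det2_qmat by (simp add: base_x_def base_y_def det2_def algebra_simps)

text \<open>The function r \<mapsto> (r S + 1) (S + r) / (1 - r)^2 is strictly increasing on [0, 1), and the
  hypotheses say that it takes the same value at r and r'.\<close>
lemma fibre_invariants_eq:
  fixes R R' r r' S L L' :: real
  assumes R: "R > 0" "R' > 0" and r: "0 \<le> r" "r < 1" and r': "0 \<le> r'" "r' < 1" and S: "S > 0"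
    and E1: "R' * (r' * S + 1) = L * (R * (r * S + 1))" and E2: "R' * (S + r') = L' * (R * (S + r))"
    and E3: "L * L' * (R * (1 - r))\<^sup>2 = (R' * (1 - r'))\<^sup>2"
  shows "r = r'"
proof -
  have "R'\<^sup>2 * R\<^sup>2 * ((r' * S + 1) * (S + r') * (1 - r)\<^sup>2)
      = (R' * (r' * S + 1)) * (R' * (S + r')) * (R * (1 - r))\<^sup>2"
    by (simp add: power2_eq_square mult_ac)
  also have "\<dots> = (R * (r * S + 1)) * (R * (S + r)) * (L * L' * (R * (1 - r))\<^sup>2)"
    unfolding E1 E2 by (simp add: mult_ac)
  also have "\<dots> = R'\<^sup>2 * R\<^sup>2 * ((r * S + 1) * (S + r) * (1 - r')\<^sup>2)"
    unfolding E3 by (simp add: power2_eq_square mult_ac)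
  finally have eq: "(r' * S + 1) * (S + r') * (1 - r)\<^sup>2 = (r * S + 1) * (S + r) * (1 - r')\<^sup>2"
    using R by simp
  have less: "(x * S + 1) * (S + x) * (1 - y)\<^sup>2 < (y * S + 1) * (S + y) * (1 - x)\<^sup>2"
    if "0 \<le> x" "x < y" "y < 1" for x y
  proof (rule mult_strict_mono)
    show "(x * S + 1) * (S + x) < (y * S + 1) * (S + y)"
      using that S by (intro mult_le_less_imp_less add_right_mono mult_right_mono)
        (auto intro: add_nonneg_pos add_nonneg_nonneg)
    show "(1 - y)\<^sup>2 < (1 - x)\<^sup>2"
      using that by (intro power_strict_mono) auto
  qed (use that S in \<open>auto intro!: mult_pos_pos add_pos_nonneg\<close>)
  show ?thesis
    using less[of r r'] less[of r' r] r r' eq by (cases r r' rule: linorder_cases) auto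
qed

text \<open>Comparing the norms and the determinants of both pairs.\<close>
lemma rescaled_xvec_yvec_abs:
  assumes t: "t \<noteq> 0" and a: "cmod a < 1" and a': "cmod a' < 1"
    and x: "xvec t d' a' = cscale c (xvec t d a)" and y: "yvec t d' a' = cscale c' (yvec t d a)"
  shows "cmod a = cmod a' \<and> c' = cnj c"
proof -
  define R R' r r' S where "R = (norm (rot d))\<^sup>2" and "R' = (norm (rot d'))\<^sup>2"
    and "r = (cmod a)\<^sup>2" and "r' = (cmod a')\<^sup>2" and "S = (cmod t)\<^sup>2"
  have R: "R > 0" "R' > 0" using rot_nonzero by (simp_all add: R_def R'_def)
  have r: "0 \<le> r" "r < 1" and r': "0 \<le> r'" "r' < 1" and S: "S > 0"
    using a a' t by (simp_all add: r_def r'_def S_def abs_square_less_1)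
  have E1: "R' * (r' * S + 1) = (cmod c)\<^sup>2 * (R * (r * S + 1))"
    using arg_cong[OF x, of "\<lambda>v. (norm v)\<^sup>2"]
    by (simp add: norm_xvec_sq norm_cscale_sq R_def R'_def r_def r'_def S_def)
  have E2: "R' * (S + r') = (cmod c')\<^sup>2 * (R * (S + r))"
    using arg_cong[OF y, of "\<lambda>v. (norm v)\<^sup>2"]
    by (simp add: norm_yvec_sq norm_cscale_sq R_def R'_def r_def r'_def S_def)
  have "t * of_real (R' * (1 - r')) = t * (c * c' * of_real (R * (1 - r)))"
    using arg_cong2[OF x y, of det2]
    by (simp add: det2_cscale det2_xvec_yvec R_def R'_def r_def r'_def complex_norm_square[symmetric]
        algebra_simps)
  then have E3: "of_real (R' * (1 - r')) = c * c' * of_real (R * (1 - r))"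
    using t by simp
  have "(cmod c)\<^sup>2 * (cmod c')\<^sup>2 * (R * (1 - r))\<^sup>2 = (R' * (1 - r'))\<^sup>2"
    using arg_cong[OF E3, of "\<lambda>z. (cmod z)\<^sup>2"]
    by (simp only: norm_mult norm_of_real power2_abs power_mult_distrib)
  then have "r = r'" by (rule fibre_invariants_eq[OF R r r' S E1 E2])
  moreover have "r' * S + 1 > 0" using r' S by (simp add: add_nonneg_pos)
  ultimately have "R' = (cmod c)\<^sup>2 * R"
    using E1 by (metis mult.assoc mult.commute mult_right_cancel less_irrefl)
  then have "of_real (R' * (1 - r')) = c * cnj c * of_real (R * (1 - r))"
    using \<open>r = r'\<close> by (simp add: complex_norm_square[symmetric])
  then have "c' = cnj c"
    using E3 R r r' \<open>r = r'\<close> by (auto simp: mult.commute)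
  moreover have "cmod a = cmod a'"
    using \<open>r = r'\<close> unfolding r_def r'_def by (simp add: power2_eq_iff_nonneg)
  ultimately show ?thesis by blast
qed

text \<open>Comparing the Hermitian products of both pairs.\<close>
lemma rescaled_xvec_yvec_phase:
  assumes x: "xvec t d' a' = cscale c (xvec t d a)" and y: "yvec t d' a' = cscale (cnj c) (yvec t d a)"
    and aa: "cmod a = cmod a'"
  shows "cnj c * a' = c * a"
proof -
  define R R' where "R = (norm (rot d))\<^sup>2" and "R' = (norm (rot d'))\<^sup>2"
  have R: "R > 0" using rot_nonzero by (simp add: R_def)
  have "R' * ((cmod a)\<^sup>2 * (cmod t)\<^sup>2 + 1) = ((cmod c)\<^sup>2 * R) * ((cmod a)\<^sup>2 * (cmod t)\<^sup>2 + 1)"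
    using arg_cong[OF x, of "\<lambda>v. (norm v)\<^sup>2"] aa by (simp add: norm_xvec_sq norm_cscale_sq R_def R'_def)
  moreover have "(cmod a)\<^sup>2 * (cmod t)\<^sup>2 + 1 > 0" by (simp add: add_nonneg_pos)
  ultimately have "R' = (cmod c)\<^sup>2 * R" by simp
  then have R': "of_real R' = c * cnj c * of_real R" by (simp add: complex_norm_square[symmetric])
  have "of_real R' * a' * (1 + t * cnj t) = c * c * (of_real R * a) * (1 + t * cnj t)"
    using arg_cong2[OF x y, of hinner] by (simp add: hinner_cscale hinner_xvec_yvec R_def R'_def mult_ac)
  moreover have "1 + t * cnj t \<noteq> 0" using one_plus_sq_ne_0[of 1 t] by simp
  ultimately have "c * cnj c * of_real R * a' = c * c * (of_real R * a)" unfolding R' by simp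
  then have "c * (of_real R * (cnj c * a' - c * a)) = 0" by (simp add: algebra_simps)
  moreover have "c \<noteq> 0" using \<open>R' = (cmod c)\<^sup>2 * R\<close> rot_nonzero[of d'] by (auto simp: R'_def)
  ultimately show ?thesis using R by simp
qed

lemma rescaled_xvec_None_Some:
  assumes x: "xvec t (Some z) a' = cscale c (xvec t None a)" and phase: "cnj c * a' = c * a"
  shows False
proof -
  have e1: "z - a' * t + c = 0" and e2: "1 + cnj z * a' * t + c * a * t = 0"
    using x by (auto simp: xvec_None xvec_Some cscale_def)
  have "1 + (a' * cnj a') * (t * cnj t)
      = (1 + cnj z * a' * t + c * a * t) - a' * t * cnj (z - a' * t + c) + t * (cnj c * a' - c * a)"
    by (simp add: algebra_simps)
  also have "\<dots> = 0" using e1 e2 phase by simp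
  finally show False using one_plus_sq_ne_0[of a' t] by simp
qed

lemma rescaled_xvec_yvec_Some_imp_eq:
  assumes x: "xvec t (Some z') a' = cscale c (xvec t (Some z) a)"
    and y: "yvec t (Some z') a' = cscale (cnj c) (yvec t (Some z) a)"
    and phase: "cnj c * a' = c * a" and aa: "cmod a = cmod a'"
  shows "z = z' \<and> a = a'"
proof -
  have x1: "z' - a' * t = c * (z - a * t)" and x2: "1 + cnj z' * a' * t = c * (1 + cnj z * a * t)"
    using x by (auto simp: xvec_Some cscale_def)
  have y2: "cnj a' + cnj z' * t = cnj c * (cnj a + cnj z * t)"
    using y by (auto simp: yvec_Some cscale_def)
  have "(cnj a' - cnj c * cnj a) * (1 + t * cnj t)
     = (cnj a' + cnj z' * t - cnj c * (cnj a + cnj z * t)) - t * cnj (z' - a' * t - c * (z - a * t))"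
    by (simp add: algebra_simps)
  also have "\<dots> = 0" using x1 y2 by simp
  finally have "cnj a' = cnj c * cnj a"
    using one_plus_sq_ne_0[of 1 t] by simp
  then have a': "a' = c * a" by (metis complex_cnj_cnj complex_cnj_mult)
  have "c = 1"
  proof (cases "a' = 0")
    case True
    then show ?thesis using aa x2 by simp
  next
    case False
    then have "cnj c = 1" using phase a' by (simp add: algebra_simps)
    then show ?thesis by (metis complex_cnj_cnj complex_cnj_one)
  qed
  then show ?thesis using x1 a' by simp
qed

lemma rescaled_xvec_yvec_imp_eq:
  assumes c: "c \<noteq> 0"
    and x: "xvec t d' a' = cscale c (xvec t d a)" and y: "yvec t d' a' = cscale (cnj c) (yvec t d a)"
    and phase: "cnj c * a' = c * a" and aa: "cmod a = cmod a'"
  shows "d = d' \<and> a = a'"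
proof (cases d; cases d')
  assume "d = None" "d' = None"
  then show ?thesis using x phase by (simp add: xvec_None cscale_def)
next
  fix z' assume "d = None" "d' = Some z'"
  then show ?thesis using rescaled_xvec_None_Some x phase by simp
next
  fix z assume "d = Some z" "d' = None"
  then have "xvec t (Some z) a = cscale (1 / c) (xvec t None a')"
    using x c by (simp add: cscale_def)
  moreover have "cnj (1 / c) * a = (1 / c) * a'"
    using phase c by (simp add: field_simps)
  ultimately show ?thesis using rescaled_xvec_None_Some by blast
next
  fix z z' assume "d = Some z" "d' = Some z'"
  then show ?thesis using rescaled_xvec_yvec_Some_imp_eq x y phase aa by simp
qed

lemma inj_on_uM_Mplus:
  assumes t: "t \<noteq> 0"
  shows "inj_on (uM t) Mplus"
proof (rule inj_onI)
  fix m m' assume "m \<in> Mplus" "m' \<in> Mplus" and eq: "uM t m = uM t m'"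
  then obtain d a d' a' where m: "m = (d, Some a)" "cmod a < 1" and m': "m' = (d', Some a')" "cmod a' < 1"
    by (auto simp: Mplus_def)
  have "proj (xvec t d a) = proj (xvec t d' a')" "proj (yvec t d a) = proj (yvec t d' a')"
    using eq by (simp_all add: m m' uM_eq_proj[OF t])
  then obtain c c' where c: "c \<noteq> 0" and x: "xvec t d' a' = cscale c (xvec t d a)"
    and y: "yvec t d' a' = cscale c' (yvec t d a)"
    using proj_eq_proj_imp_cscale xvec_nonzero yvec_nonzero[OF t] by metis
  have "c' = cnj c" and aa: "cmod a = cmod a'" using rescaled_xvec_yvec_abs[OF t m(2) m'(2) x y] by auto
  then have y': "yvec t d' a' = cscale (cnj c) (yvec t d a)" using y by simp
  have "d = d' \<and> a = a'"
    using rescaled_xvec_yvec_imp_eq[OF c x y' rescaled_xvec_yvec_phase[OF x y' aa] aa] .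
  then show "m = m'" by (simp add: m m')
qed

text \<open>Normalising q to the form rot d moves its phase into a.\<close>
lemma qmat_base_eq_xvec_yvec:
  assumes t: "t \<noteq> 0" and q: "q \<noteq> 0"
  obtains d a' where "cmod a' = cmod a" "proj (xvec t d a') = proj (qmat q (base_x t a))"
    "proj (yvec t d a') = proj (qmat q (base_y t a))"
proof (cases "fst q = 0")
  case False
  define al be where "al = fst q" and "be = snd q"
  define d a' where "d = be / cnj al" and "a' = (al / cnj al) * a"
  have q_eq: "q = (al, be)" by (simp add: al_def be_def)
  have al: "al \<noteq> 0" "cnj al \<noteq> 0" using False by (simp_all add: al_def)
  have "qmat q (base_x t a) = cscale (cnj al) (xvec t (Some d) a')"
    using al by (simp add: q_eq qmat_def base_x_def cscale_def xvec_Some d_def a'_def field_simps)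
  moreover have "qmat q (base_y t a) = cscale al (yvec t (Some d) a')"
    using al by (simp add: q_eq qmat_def base_y_def cscale_def yvec_Some d_def a'_def field_simps)
  moreover have "cmod a' = cmod a" using al by (simp add: a'_def norm_mult norm_divide)
  ultimately show ?thesis
    using that al proj_cscale xvec_nonzero yvec_nonzero[OF t] by metis
next
  case True
  define be where "be = snd q"
  define a' where "a' = (cnj be / be) * a"
  have q_eq: "q = (0, be)" using True by (simp add: be_def prod_eq_iff)
  have be: "be \<noteq> 0" "cnj be \<noteq> 0" using q by (simp_all add: q_eq zero_prod_def)
  have "qmat q (base_x t a) = cscale (- be) (xvec t None a')"
    using be by (simp add: q_eq qmat_def base_x_def cscale_def xvec_None a'_def field_simps)
  moreover have "qmat q (base_y t a) = cscale (- cnj be) (yvec t None a')"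
    using be by (simp add: q_eq qmat_def base_y_def cscale_def yvec_None a'_def field_simps)
  moreover have "cmod a' = cmod a" using be by (simp add: a'_def norm_mult norm_divide)
  ultimately show ?thesis
    using that be proj_cscale xvec_nonzero yvec_nonzero[OF t] neg_equal_0_iff_equal by metis
qed

definition steer :: "complex \<Rightarrow> complex \<Rightarrow> complex \<times> complex \<Rightarrow> complex \<times> complex" where
  "steer t a v = (cnj (snd v) - fst v * cnj a * cnj t, fst v + cnj (snd v) * a * t)"

lemma qmat_steer_base_x:
  "qmat (steer t a v) (base_x t a) = cscale (1 + (a * cnj a) * (t * cnj t)) v"
  by (simp add: steer_def qmat_def base_x_def cscale_def algebra_simps)

lemma steer_nonzero: "v \<noteq> 0 \<Longrightarrow> steer t a v \<noteq> 0"
  using qmat_steer_base_x[of t a v] one_plus_sq_ne_0[of a t]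
  by (auto simp: cscale_def qmat_def zero_prod_def prod_eq_iff)

lemma exists_fixed_point_sq:
  fixes k :: real
  assumes "k \<ge> 0"
  obtains r where "0 \<le> r" "r < 1" "r = k * (1 - r)\<^sup>2"
proof -
  have "continuous_on {0..1} (\<lambda>r. r - k * (1 - r)\<^sup>2)"
    by (intro continuous_intros)
  then obtain r where r: "0 \<le> r" "r \<le> 1" "r - k * (1 - r)\<^sup>2 = 0"
    using IVT'[of "\<lambda>r. r - k * (1 - r)\<^sup>2" 0 0 1] assms by auto
  moreover have "r \<noteq> 1" using r(3) by auto
  ultimately show ?thesis using that by auto
qed

lemma det2_lift_nonzero: "x \<noteq> y \<Longrightarrow> det2 (lift x) (lift y) \<noteq> 0"
  using proj_eq_proj_iff_det2[OF lift_nonzero lift_nonzero] by (metis proj_lift)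

lemma qmat_steer_base_y:
  assumes "det2 v w \<noteq> 0" and a: "cnj a * det2 v w = hinner w v * t * c"
    and c: "c * (1 + t * cnj t) = 1 - a * cnj a"
  shows "qmat (steer t a v) (base_y t a)
    = cscale (t * (1 - a * cnj a) * (complex_of_real (norm v))\<^sup>2 / det2 v w) w"
proof -
  obtain x1 x2 y1 y2 where v: "v = (x1, x2)" and w: "w = (y1, y2)" by fastforce
  let ?De = "det2 v w" and ?eta = "hinner w v" and ?s = "t * (1 - a * cnj a)"
    and ?n = "(complex_of_real (norm v))\<^sup>2"
  have "?De * fst (qmat (steer t a v) (base_y t a))
      = x1 * (cnj a * ?De) * (1 + t * cnj t) - t * cnj x2 * ?De * (1 - a * cnj a)"
    by (simp add: v w steer_def qmat_def base_y_def det2_def algebra_simps)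
  also have "\<dots> = ?s * (x1 * ?eta - cnj x2 * ?De)"
    unfolding a c[symmetric] by (simp add: algebra_simps)
  also have "x1 * ?eta - cnj x2 * ?De = ?n * y1"
    by (simp add: v w of_real_norm_Pair_sq hinner_def det2_def algebra_simps)
  finally have 1: "?De * fst (qmat (steer t a v) (base_y t a)) = ?s * (?n * y1)" .
  have "?De * snd (qmat (steer t a v) (base_y t a))
      = x2 * (cnj a * ?De) * (1 + t * cnj t) + t * cnj x1 * ?De * (1 - a * cnj a)"
    by (simp add: v w steer_def qmat_def base_y_def det2_def algebra_simps)
  also have "\<dots> = ?s * (x2 * ?eta + cnj x1 * ?De)"
    unfolding a c[symmetric] by (simp add: algebra_simps)
  also have "x2 * ?eta + cnj x1 * ?De = ?n * y2"
    by (simp add: v w of_real_norm_Pair_sq hinner_def det2_def algebra_simps)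
  finally have 2: "?De * snd (qmat (steer t a v) (base_y t a)) = ?s * (?n * y2)" .
  show ?thesis
    using 1 2 assms(1) by (simp add: w cscale_def prod_eq_iff field_simps)
qed

text \<open>|a| is fixed by the fixed point equation |a|^2 = k (1 - |a|^2)^2 and its phase by the
  Hermitian product of the lifts of x and y.\<close>
lemma exists_Mplus_uM_eq:
  assumes t: "t \<noteq> 0" and xy: "x \<noteq> y"
  obtains m where "m \<in> Mplus" "uM t m = (x, y)"
proof -
  define De eta S where "De = det2 (lift x) (lift y)" and "eta = hinner (lift y) (lift x)"
    and "S = (cmod t)\<^sup>2"
  have De: "De \<noteq> 0" using det2_lift_nonzero[OF xy] by (simp add: De_def)
  obtain r where r: "0 \<le> r" "r < 1" "r = S * (cmod eta)\<^sup>2 / ((cmod De)\<^sup>2 * (1 + S)\<^sup>2) * (1 - r)\<^sup>2"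
    using exists_fixed_point_sq[of "S * (cmod eta)\<^sup>2 / ((cmod De)\<^sup>2 * (1 + S)\<^sup>2)"] by (auto simp: S_def)
  have S1: "1 + S > 0" by (simp add: S_def add_pos_nonneg)
  define c where "c = (1 - r) / (1 + S)"
  define a where "a = cnj eta * cnj t * of_real c / cnj De"
  have "c \<ge> 0" using S1 r by (simp add: c_def)
  then have "cmod a = cmod eta * cmod t * c / cmod De"
    by (simp add: a_def norm_mult norm_divide)
  then have "(cmod a)\<^sup>2 = r"
    using r(3) by (simp add: c_def power_divide power_mult_distrib S_def mult_ac)
  then have acnj: "a * cnj a = of_real r" and a1: "cmod a < 1"
    using r by (simp add: complex_norm_square[symmetric], metis abs_norm_cancel abs_square_less_1)
  have "c * (1 + S) = 1 - r" using S1 by (simp add: c_def)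
  then have "of_real c * (1 + of_real S) = (1 - of_real r :: complex)"
    by (metis of_real_1 of_real_add of_real_diff of_real_mult)
  moreover have "t * cnj t = of_real S" by (simp add: S_def complex_norm_square[symmetric])
  ultimately have "of_real c * (1 + t * cnj t) = 1 - a * cnj a" by (simp add: acnj)
  moreover have "cnj a * De = eta * t * of_real c" using De by (simp add: a_def field_simps)
  ultimately have "qmat (steer t a (lift x)) (base_y t a)
      = cscale (t * (1 - a * cnj a) * (complex_of_real (norm (lift x)))\<^sup>2 / De) (lift y)"
    using qmat_steer_base_y[OF De[unfolded De_def]] unfolding De_def eta_def by blast
  moreover have "t * (1 - a * cnj a) * (complex_of_real (norm (lift x)))\<^sup>2 / De \<noteq> 0"
    using t r De lift_nonzero[of x] by (simp add: acnj)
  moreover obtain d a' where "cmod a' = cmod a"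
    "proj (xvec t d a') = proj (qmat (steer t a (lift x)) (base_x t a))"
    "proj (yvec t d a') = proj (qmat (steer t a (lift x)) (base_y t a))"
    using qmat_base_eq_xvec_yvec[OF t steer_nonzero[OF lift_nonzero]] by metis
  ultimately have "uM t (d, Some a') = (x, y)" "(d, Some a') \<in> Mplus"
    using a1 one_plus_sq_ne_0[of a t]
    by (simp_all add: uM_eq_proj[OF t] qmat_steer_base_x proj_cscale lift_nonzero Mplus_def)
  then show ?thesis using that by blast
qed

lemma exists_Kset_uM_eq:
  assumes t: "t \<noteq> 0"
  obtains m where "m \<in> Kset" "uM t m = (x, x)"
proof -
  define q where "q = steer t 1 (lift x)"
  have "qmat q (base_x t 1) = cscale (1 + t * cnj t) (lift x)"
    by (simp add: q_def qmat_steer_base_x)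
  moreover have "base_y t 1 = base_x t 1" by (simp add: base_x_def base_y_def)
  moreover obtain d a' where "cmod a' = 1" "proj (xvec t d a') = proj (qmat q (base_x t 1))"
      "proj (yvec t d a') = proj (qmat q (base_y t 1))"
    using qmat_base_eq_xvec_yvec[OF t steer_nonzero[OF lift_nonzero]] unfolding q_def by (metis norm_one)
  ultimately have "uM t (d, Some a') = (x, x)" "(d, Some a') \<in> Kset"
    using one_plus_sq_ne_0[of 1 t]
    by (simp_all add: uM_eq_proj[OF t] proj_cscale lift_nonzero Kset_def)
  then show ?thesis using that by blast
qed

lemma uM_in_Diag_iff:
  assumes t: "t \<noteq> 0"
  shows "uM t (d, Some a) \<in> Diag \<longleftrightarrow> cmod a = 1"
proof -
  have "uM t (d, Some a) \<in> Diag \<longleftrightarrow> proj (xvec t d a) = proj (yvec t d a)"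
    by (auto simp: uM_eq_proj[OF t] Diag_def)
  also have "\<dots> \<longleftrightarrow> det2 (xvec t d a) (yvec t d a) = 0"
    by (rule proj_eq_proj_iff_det2[OF xvec_nonzero yvec_nonzero[OF t]])
  also have "\<dots> \<longleftrightarrow> a * cnj a = 1"
    using t rot_nonzero[of d] by (simp add: det2_xvec_yvec)
  also have "\<dots> \<longleftrightarrow> (cmod a)\<^sup>2 = 1"
    by (metis complex_norm_square of_real_1 of_real_eq_iff of_real_power)
  also have "\<dots> \<longleftrightarrow> cmod a = 1"
    by (simp add: abs_square_eq_1)
  finally show ?thesis .
qed

definition inv_pt :: "complex \<Rightarrow> sphere" where
  "inv_pt c = (if c = 0 then None else Some (1 / c))"

lemma pinv_inv_pt [simp]: "pinv (inv_pt c) = c"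
  by (simp add: inv_pt_def pinv_def)

lemma inv_pt_ne_Some_0 [simp]: "inv_pt c \<noteq> Some 0"
  by (simp add: inv_pt_def)

lemma inv_pt_pinv: "p \<noteq> Some 0 \<Longrightarrow> inv_pt (pinv p) = p"
  by (cases p) (auto simp: inv_pt_def pinv_def)

lemma uM_inv_pt:
  assumes t: "t \<noteq> 0"
  shows "uM t (d, inv_pt c) = prod.swap (uM t (d, Some (cnj c)))"
proof (cases "c = 0")
  case True
  then show ?thesis by (simp add: inv_pt_def uM_def)
next
  case False
  have "base_x t (1 / c) = cscale (1 / c) (base_y t (cnj c))"
    "base_y t (1 / c) = cscale (1 / cnj c) (base_x t (cnj c))"
    using False by (simp_all add: base_x_def base_y_def cscale_def)
  then have "xvec t d (1 / c) = cscale (1 / c) (yvec t d (cnj c))"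
    "yvec t d (1 / c) = cscale (1 / cnj c) (xvec t d (cnj c))"
    by (simp_all add: xvec_def yvec_def qmat_cscale)
  then show ?thesis
    using False by (simp add: inv_pt_def uM_eq_proj[OF t] proj_cscale xvec_nonzero yvec_nonzero[OF t])
qed

text \<open>The inversion a \<mapsto> 1 / cnj a of the fibre coordinate; meaningful only on M+, where the
  second component is not None.\<close>
definition reflect :: "param \<Rightarrow> param" where
  "reflect m = (fst m, inv_pt (cnj (the (snd m))))"

lemma uM_reflect: "t \<noteq> 0 \<Longrightarrow> m \<in> Mplus \<Longrightarrow> uM t (reflect m) = prod.swap (uM t m)"
  by (auto simp: Mplus_def reflect_def uM_inv_pt)

lemma bij_betw_reflect: "bij_betw reflect Mplus Mminus"
proof -
  have "inj_on reflect Mplus"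
    by (rule inj_onI) (auto simp: Mplus_def reflect_def dest: arg_cong[of _ _ pinv])
  moreover have "reflect ` Mplus = Mminus"
  proof (intro equalityI subsetI)
    fix m assume "m \<in> reflect ` Mplus"
    then obtain d a where m: "m = reflect (d, Some a)" and a: "cmod a < 1" by (auto simp: Mplus_def)
    show "m \<in> Mminus"
    proof (cases "a = 0")
      case False
      then have "1 < cmod (1 / cnj a)" using a by (simp add: norm_divide less_divide_eq)
      then show ?thesis using False by (simp add: m reflect_def inv_pt_def Mminus_def)
    qed (simp add: m reflect_def inv_pt_def Mminus_def)
  next
    fix m assume "m \<in> Mminus"
    then consider d where "m = (d, None)" | d b where "m = (d, Some b)" "cmod b > 1"
      by (auto simp: Mminus_def)
    then show "m \<in> reflect ` Mplus"
    proof cases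
      case (1 d)
      then have "m = reflect (d, Some 0)" by (simp add: reflect_def inv_pt_def)
      then show ?thesis by (auto simp: Mplus_def)
    next
      case (2 d b)
      then have "m = reflect (d, Some (1 / cnj b))" by (auto simp: reflect_def inv_pt_def)
      moreover have "cmod (1 / cnj b) < 1" using 2 by (simp add: norm_divide divide_less_eq)
      ultimately show ?thesis by (auto simp: Mplus_def)
    qed
  qed
  ultimately show ?thesis by (simp add: bij_betw_def)
qed

lemma bij_betw_uM_Mplus:
  assumes t: "t \<noteq> 0"
  shows "bij_betw (uM t) Mplus (UNIV - Diag)"
proof -
  have "uM t ` Mplus \<subseteq> UNIV - Diag"
    using uM_in_Diag_iff[OF t] by (auto simp: Mplus_def)
  moreover have "UNIV - Diag \<subseteq> uM t ` Mplus"
  proof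
    fix p assume "p \<in> UNIV - Diag"
    then obtain x y where "p = (x, y)" "x \<noteq> y" by (cases p) (auto simp: Diag_def)
    then show "p \<in> uM t ` Mplus" using exists_Mplus_uM_eq[OF t] by (metis image_eqI)
  qed
  ultimately show ?thesis using inj_on_uM_Mplus[OF t] by (simp add: bij_betw_def)
qed

lemma bij_betw_uM_Mminus:
  assumes t: "t \<noteq> 0"
  shows "bij_betw (uM t) Mminus (UNIV - Diag)"
proof -
  have "bij_betw prod.swap (UNIV - Diag) (UNIV - Diag :: (sphere \<times> sphere) set)"
    by (rule bij_betwI[of _ _ _ prod.swap]) (auto simp: Diag_def)
  then have "bij_betw (prod.swap \<circ> uM t) Mplus (UNIV - Diag)"
    using bij_betw_trans bij_betw_uM_Mplus[OF t] by blast
  then have "bij_betw (uM t \<circ> reflect) Mplus (UNIV - Diag)"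
    by (rule bij_betw_cong[THEN iffD1, rotated]) (simp add: uM_reflect[OF t])
  then show ?thesis using bij_betw_comp_iff[OF bij_betw_reflect] by blast
qed

lemma params_cases: "m \<in> Mplus \<or> m \<in> Kset \<or> m \<in> Mminus"
  by (cases m rule: prod.exhaust, rename_tac d q, case_tac q)
    (auto simp: Mplus_def Kset_def Mminus_def not_less_iff_gr_or_eq)

lemma uM_image_Kset:
  assumes t: "t \<noteq> 0"
  shows "uM t ` Kset = Diag"
proof
  show "uM t ` Kset \<subseteq> Diag" using uM_in_Diag_iff[OF t] by (auto simp: Kset_def)
  show "Diag \<subseteq> uM t ` Kset"
    using exists_Kset_uM_eq[OF t] by (auto simp: Diag_def) (metis image_eqI)
qed

lemma surj_uM:
  assumes t: "t \<noteq> 0"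
  shows "surj (uM t)"
proof -
  have "Diag \<subseteq> range (uM t)" "UNIV - Diag \<subseteq> range (uM t)"
    using uM_image_Kset[OF t] bij_betw_uM_Mplus[OF t] unfolding bij_betw_def by blast+
  then show ?thesis by blast
qed

lemma uM_vimage_Diag:
  assumes t: "t \<noteq> 0"
  shows "uM t -` Diag = Kset"
proof
  have "uM t m \<notin> Diag" if "m \<in> Mminus" for m
  proof -
    have "m \<in> reflect ` Mplus" using bij_betw_reflect that by (simp add: bij_betw_def)
    then obtain m' where "m' \<in> Mplus" "m = reflect m'" by blast
    moreover from this have "uM t m' \<notin> Diag"
      using bij_betw_uM_Mplus[OF t] by (auto simp: bij_betw_def)
    ultimately show ?thesis
      using uM_reflect[OF t] by (cases "uM t m'") (auto simp: Diag_def)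
  qed
  moreover have "uM t m \<notin> Diag" if "m \<in> Mplus" for m
    using bij_betw_uM_Mplus[OF t] that by (auto simp: bij_betw_def)
  ultimately show "uM t -` Diag \<subseteq> Kset"
    using params_cases by blast
  show "Kset \<subseteq> uM t -` Diag" using uM_image_Kset[OF t] by blast
qed

section \<open>Charts given by quotients\<close>

text \<open>Data of a map R \<rightarrow> C^2 of the form z \<mapsto> (N1 z / D1 z, N2 z / D2 z), with C^\<infinity> numerators
  and denominators, their derivatives, and a C^\<infinity> right inverse W of the linear map
  h \<mapsto> (D1 N1' h - N1 D1' h, D2 N2' h - N2 D2' h), the numerator of the derivative of the
  quotient.\<close>
locale frac_chart =
  fixes N1 D1 N2 D2 :: "complex \<times> complex \<Rightarrow> complex"
    and N1' D1' N2' D2' :: "complex \<times> complex \<Rightarrow> complex \<times> complex \<Rightarrow> complex"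
    and W :: "complex \<times> complex \<Rightarrow> complex \<times> complex \<Rightarrow> complex \<times> complex"
    and R :: "(complex \<times> complex) set"
  assumes open_R: "open R"
    and Cinf_N1: "Cinf_on UNIV N1" and Cinf_D1: "Cinf_on UNIV D1"
    and Cinf_N2: "Cinf_on UNIV N2" and Cinf_D2: "Cinf_on UNIV D2"
    and N1': "(N1 has_derivative N1' z) (at z)" and D1': "(D1 has_derivative D1' z) (at z)"
    and N2': "(N2 has_derivative N2' z) (at z)" and D2': "(D2 has_derivative D2' z) (at z)"
    and Cinf_W: "Cinf_on (R \<times> UNIV) (\<lambda>x. W (fst x) (snd x))"
    and W_right_inverse: "z \<in> R \<Longrightarrow>
      (D1 z * N1' z (W z p) - N1 z * D1' z (W z p), D2 z * N2' z (W z p) - N2 z * D2' z (W z p)) = p"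
begin

definition quot_dom :: "(complex \<times> complex) set" where
  "quot_dom = {z \<in> R. D1 z \<noteq> 0 \<and> D2 z \<noteq> 0}"

definition quot :: "complex \<times> complex \<Rightarrow> complex \<times> complex" where
  "quot z = (N1 z / D1 z, N2 z / D2 z)"

lemma Ck_N1: "Ck k S N1" and Ck_D1: "Ck k S D1" and Ck_N2: "Ck k S N2" and Ck_D2: "Ck k S D2"
  using Cinf_N1 Cinf_D1 Cinf_N2 Cinf_D2 by (simp_all add: Cinf_on_UNIV_imp_Ck)

lemma open_quot_dom: "open quot_dom"
proof -
  have "continuous_on UNIV D1" "continuous_on UNIV D2"
    using Ck_D1[of 0] Ck_D2[of 0] by auto
  then have "open {z. D1 z \<noteq> 0}" "open {z. D2 z \<noteq> 0}"
    by (simp_all add: open_Collect_neq continuous_on_const)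
  moreover have "quot_dom = R \<inter> {z. D1 z \<noteq> 0} \<inter> {z. D2 z \<noteq> 0}" by (auto simp: quot_dom_def)
  ultimately show ?thesis using open_R by auto
qed

lemma Cinf_quot: "Cinf_on quot_dom quot"
  unfolding Cinf_on_def quot_def
  by (intro conjI allI open_quot_dom Ck_intros Ck_N1 Ck_D1 Ck_N2 Ck_D2) (auto simp: quot_dom_def)

lemma quot_has_derivative:
  assumes "z \<in> quot_dom"
  shows "(quot has_derivative (\<lambda>h. ((D1 z * N1' z h - N1 z * D1' z h) / (D1 z)\<^sup>2,
      (D2 z * N2' z h - N2 z * D2' z h) / (D2 z)\<^sup>2))) (at z)"
proof -
  have "D1 z \<noteq> 0" "D2 z \<noteq> 0" using assms by (auto simp: quot_dom_def)
  then show ?thesis unfolding quot_def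
    by (auto intro!: derivative_eq_intros N1' D1' N2' D2' simp: power2_eq_square field_simps)
qed

lemma Cinf_inv_quot:
  assumes "inj_on quot quot_dom"
  shows "Cinf_on (quot ` quot_dom) (inv_into quot_dom quot)"
proof (rule Cinf_on_inv_into[OF Cinf_quot assms])
  let ?G = "\<lambda>z v. W z ((D1 z)\<^sup>2 * fst v, (D2 z)\<^sup>2 * snd v)"
  show "frechet_derivative quot (at z) (?G z v) = v" if "z \<in> quot_dom" for z v
    using frechet_derivative_at[OF quot_has_derivative[OF that], symmetric] W_right_inverse[of z] that
    by (simp add: quot_dom_def prod_eq_iff)
  show "Cinf_on quot_dom (\<lambda>z. ?G z v)" for v
  proof -
    have "Ck k quot_dom (\<lambda>z. (z, ((D1 z)\<^sup>2 * fst v, (D2 z)\<^sup>2 * snd v)))" for k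
      unfolding power2_eq_square by (intro open_quot_dom Ck_intros Ck_D1 Ck_D2)
    then have "Ck k quot_dom (\<lambda>z. ?G z v)" for k
      using Ck_compose[OF open_quot_dom Cinf_W, of k "\<lambda>z. (z, ((D1 z)\<^sup>2 * fst v, (D2 z)\<^sup>2 * snd v))"]
      by (auto simp: quot_dom_def)
    then show ?thesis using open_quot_dom by (simp add: Cinf_on_def)
  qed
qed

end

lemma frac_chart_swap:
  assumes "frac_chart N1 D1 N2 D2 N1' D1' N2' D2' W R"
  shows "frac_chart N2 D2 N1 D1 N2' D2' N1' D1' (\<lambda>z p. W z (snd p, fst p)) R"
proof -
  interpret frac_chart N1 D1 N2 D2 N1' D1' N2' D2' W R by fact
  let ?F = "\<lambda>x. (fst x, snd (snd x), fst (snd x))"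
  have "Ck k (R \<times> UNIV) (\<lambda>x. W (fst (?F x)) (snd (?F x)))" for k
    by (rule Ck_compose[OF _ Cinf_W]) (auto intro!: Ck_intros open_Times open_R)
  then have "Cinf_on (R \<times> UNIV) (\<lambda>x. W (fst x) (snd (snd x), fst (snd x)))"
    using open_R by (simp add: Cinf_on_def open_Times)
  then show ?thesis
    by unfold_locales (use W_right_inverse in \<open>auto simp: prod_eq_iff open_R Cinf_N1 Cinf_D1 Cinf_N2
        Cinf_D2 N1' D1' N2' D2'\<close>)
qed

text \<open>Passing to the reciprocal of either quotient (the chart 1/z on that factor of X_t).\<close>
lemma frac_chart_orient:
  assumes "frac_chart N1 D1 N2 D2 N1' D1' N2' D2' W R"
  shows "frac_chart (if e1 then D1 else N1) (if e1 then N1 else D1)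
    (if e2 then D2 else N2) (if e2 then N2 else D2)
    (if e1 then D1' else N1') (if e1 then N1' else D1') (if e2 then D2' else N2') (if e2 then N2' else D2')
    (\<lambda>z p. W z ((if e1 then - 1 else 1) * fst p, (if e2 then - 1 else 1) * snd p)) R"
proof -
  interpret frac_chart N1 D1 N2 D2 N1' D1' N2' D2' W R by fact
  let ?s1 = "if e1 then - 1 else 1 :: complex" and ?s2 = "if e2 then - 1 else 1 :: complex"
  let ?F = "\<lambda>x. (fst x, ?s1 * fst (snd x), ?s2 * snd (snd x))"
  have "Ck k (R \<times> UNIV) (\<lambda>x. W (fst (?F x)) (snd (?F x)))" for k
    by (rule Ck_compose[OF _ Cinf_W]) (auto intro!: Ck_intros open_Times open_R)
  then have "Cinf_on (R \<times> UNIV) (\<lambda>x. W (fst x) (?s1 * fst (snd x), ?s2 * snd (snd x)))"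
    using open_R by (simp add: Cinf_on_def open_Times)
  moreover have "((if e1 then N1 else D1) z * (if e1 then D1' else N1') z w
          - (if e1 then D1 else N1) z * (if e1 then N1' else D1') z w,
         (if e2 then N2 else D2) z * (if e2 then D2' else N2') z w
          - (if e2 then D2 else N2) z * (if e2 then N2' else D2') z w) = p"
    if "z \<in> R" "w = W z (?s1 * fst p, ?s2 * snd p)" for z w p
    using W_right_inverse[OF that(1), of "(?s1 * fst p, ?s2 * snd p)"] unfolding that(2)
    by (cases e1; cases e2) (auto simp: algebra_simps prod_eq_iff)
  ultimately show ?thesis
    using open_R Cinf_N1 Cinf_D1 Cinf_N2 Cinf_D2 N1' D1' N2' D2'
    by unfold_locales simp_all
qed

lemma frac_chart_linear:
  assumes "frac_chart N1 D1 N2 D2 N1' D1' N2' D2' W R"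
    and L: "bounded_linear L" "\<And>z. L (L z) = z"
  shows "frac_chart (N1 \<circ> L) (D1 \<circ> L) (N2 \<circ> L) (D2 \<circ> L)
    (\<lambda>z h. N1' (L z) (L h)) (\<lambda>z h. D1' (L z) (L h)) (\<lambda>z h. N2' (L z) (L h)) (\<lambda>z h. D2' (L z) (L h))
    (\<lambda>z p. L (W (L z) p)) (L -` R)"
proof -
  interpret frac_chart N1 D1 N2 D2 N1' D1' N2' D2' W R by fact
  have open_LR: "open (L -` R)"
    using open_vimage[OF open_R] linear_continuous_on[OF L(1)] by blast
  have Cinf_comp: "Cinf_on UNIV (f \<circ> L)" if "Cinf_on UNIV f" for f :: "_ \<Rightarrow> complex"
  proof -
    have "Ck k UNIV (\<lambda>z. f (L z))" for k
      by (rule Ck_compose[OF open_UNIV that Ck_linear[OF L(1) open_UNIV]]) simp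
    then show ?thesis by (simp add: Cinf_on_def o_def)
  qed
  have deriv_comp: "((f \<circ> L) has_derivative (\<lambda>h. f' (L z) (L h))) (at z)"
    if "\<And>z. (f has_derivative f' z) (at z)" for f :: "_ \<Rightarrow> complex" and f' z
    using diff_chain_at[OF bounded_linear_imp_has_derivative[OF L(1)] that] by (simp add: o_def)
  let ?F = "\<lambda>x. (L (fst x), snd x)"
  have "Ck k (L -` R \<times> UNIV) (\<lambda>x. W (fst (?F x)) (snd (?F x)))" for k
    by (rule Ck_compose[OF _ Cinf_W])
      (auto intro!: Ck_intros Ck_linear_comp[OF L(1)] open_Times open_LR)
  then have WL: "Ck k (L -` R \<times> UNIV) (\<lambda>x. W (L (fst x)) (snd x))" for k
    by simp
  have "Ck k (L -` R \<times> UNIV) (\<lambda>x. L (W (L (fst x)) (snd x)))" for k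
    by (rule Ck_linear_comp[OF L(1) open_Times[OF open_LR open_UNIV] WL])
  then have "Cinf_on (L -` R \<times> UNIV) (\<lambda>x. L (W (L (fst x)) (snd x)))"
    using open_LR by (simp add: Cinf_on_def open_Times)
  then show ?thesis
    using open_LR Cinf_N1 Cinf_D1 Cinf_N2 Cinf_D2 N1' D1' N2' D2' W_right_inverse
    by unfold_locales (simp_all add: Cinf_comp deriv_comp L(2))
qed

definition chart_inverse :: "'m set \<Rightarrow> ('m \<Rightarrow> 'v) \<Rightarrow> ('v \<Rightarrow> 'm) \<Rightarrow> bool" where
  "chart_inverse U \<phi> \<iota> \<longleftrightarrow> (\<forall>z. \<iota> z \<in> U) \<and> (\<forall>z. \<phi> (\<iota> z) = z) \<and> (\<forall>m\<in>U. \<iota> (\<phi> m) = m)"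

lemma chart_inverse_inv_into: "chart_inverse U \<phi> \<iota> \<Longrightarrow> inv_into U \<phi> = \<iota>"
  unfolding chart_inverse_def by (metis ext inj_onI inv_into_f_eq)

locale frac_chart_map = frac_chart +
  fixes U :: "'m set" and \<phi> :: "'m \<Rightarrow> complex \<times> complex" and \<iota>
    and V :: "'n set" and \<psi> :: "'n \<Rightarrow> complex \<times> complex" and \<kappa>
    and A :: "'m set" and g :: "'m \<Rightarrow> 'n"
  assumes chart_U: "chart_inverse U \<phi> \<iota>" and chart_V: "chart_inverse V \<psi> \<kappa>"
    and A: "\<iota> z \<in> A \<longleftrightarrow> z \<in> R"
    and V: "g (\<iota> z) \<in> V \<longleftrightarrow> D1 z \<noteq> 0 \<and> D2 z \<noteq> 0"
    and \<psi>: "g (\<iota> z) \<in> V \<Longrightarrow> \<psi> (g (\<iota> z)) = quot z"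
    and inj: "inj_on g A"
begin

lemma \<iota>: "\<iota> z \<in> U" "\<phi> (\<iota> z) = z" "m \<in> U \<Longrightarrow> \<iota> (\<phi> m) = m"
  and \<kappa>: "\<kappa> z \<in> V" "\<psi> (\<kappa> z) = z" "p \<in> V \<Longrightarrow> \<kappa> (\<psi> p) = p"
  using chart_U chart_V unfolding chart_inverse_def by blast+

lemma in_quot_dom_iff: "z \<in> quot_dom \<longleftrightarrow> \<iota> z \<in> A \<and> g (\<iota> z) \<in> V"
  using A V by (auto simp: quot_dom_def)

lemma chart_image_eq_quot_dom: "\<phi> ` (A \<inter> U \<inter> g -` V) = quot_dom"
proof
  show "\<phi> ` (A \<inter> U \<inter> g -` V) \<subseteq> quot_dom"
  proof
    fix z assume "z \<in> \<phi> ` (A \<inter> U \<inter> g -` V)"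
    then obtain m where "m \<in> A" "m \<in> U" "g m \<in> V" "z = \<phi> m" by blast
    then show "z \<in> quot_dom" using \<iota>(3) in_quot_dom_iff by simp
  qed
  show "quot_dom \<subseteq> \<phi> ` (A \<inter> U \<inter> g -` V)"
  proof
    fix z assume "z \<in> quot_dom"
    then have "\<iota> z \<in> A \<inter> U \<inter> g -` V" using \<iota>(1) in_quot_dom_iff by blast
    then show "z \<in> \<phi> ` (A \<inter> U \<inter> g -` V)" using \<iota>(2)[of z] by (metis image_eqI)
  qed
qed

lemma Cinf_chart_map: "Cinf_on (\<phi> ` (A \<inter> U \<inter> g -` V)) (\<psi> \<circ> g \<circ> inv_into U \<phi>)"
proof -
  have "Ck k quot_dom quot" for k using Cinf_quot by (simp add: Cinf_on_def)
  then have "Ck k quot_dom (\<psi> \<circ> g \<circ> inv_into U \<phi>)" for k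
    by (rule Ck_cong[OF open_quot_dom]) (simp add: chart_inverse_inv_into[OF chart_U] \<psi> in_quot_dom_iff)
  then show ?thesis using open_quot_dom unfolding chart_image_eq_quot_dom Cinf_on_def by blast
qed

lemma inj_on_quot_dom: "inj_on quot quot_dom"
proof (rule inj_onI)
  fix z z' assume z: "z \<in> quot_dom" "z' \<in> quot_dom" "quot z = quot z'"
  then have "\<kappa> (\<psi> (g (\<iota> z))) = \<kappa> (\<psi> (g (\<iota> z')))" using \<psi> in_quot_dom_iff by simp
  then have "g (\<iota> z) = g (\<iota> z')" using \<kappa>(3) in_quot_dom_iff z by simp
  then have "\<iota> z = \<iota> z'" using inj in_quot_dom_iff z by (auto dest: inj_onD)
  then show "z = z'" using \<iota>(2) by metis
qed

lemma inverse_chart_image_eq: "\<psi> ` (g ` A \<inter> V \<inter> inv_into A g -` U) = quot ` quot_dom"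
proof
  show "\<psi> ` (g ` A \<inter> V \<inter> inv_into A g -` U) \<subseteq> quot ` quot_dom"
  proof
    fix y assume "y \<in> \<psi> ` (g ` A \<inter> V \<inter> inv_into A g -` U)"
    then obtain m where m: "m \<in> A" "g m \<in> V" "inv_into A g (g m) \<in> U" "y = \<psi> (g m)" by auto
    then have "m \<in> U" using inj by simp
    then have "\<iota> (\<phi> m) = m" by (rule \<iota>(3))
    then have "\<phi> m \<in> quot_dom" "y = quot (\<phi> m)" using m in_quot_dom_iff \<psi>[of "\<phi> m"] by simp_all
    then show "y \<in> quot ` quot_dom" by blast
  qed
  show "quot ` quot_dom \<subseteq> \<psi> ` (g ` A \<inter> V \<inter> inv_into A g -` U)"
  proof
    fix y assume "y \<in> quot ` quot_dom"
    then obtain z where z: "z \<in> quot_dom" "y = quot z" by blast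
    then have "g (\<iota> z) \<in> g ` A \<inter> V \<inter> inv_into A g -` U" using in_quot_dom_iff inj \<iota>(1) by auto
    moreover have "y = \<psi> (g (\<iota> z))" using z \<psi> in_quot_dom_iff by simp
    ultimately show "y \<in> \<psi> ` (g ` A \<inter> V \<inter> inv_into A g -` U)" by blast
  qed
qed

lemma Cinf_inverse_chart_map:
  "Cinf_on (\<psi> ` (g ` A \<inter> V \<inter> inv_into A g -` U)) (\<phi> \<circ> inv_into A g \<circ> inv_into V \<psi>)"
proof -
  have eq: "inv_into quot_dom quot y = (\<phi> \<circ> inv_into A g \<circ> inv_into V \<psi>) y" if y: "y \<in> quot ` quot_dom" for y
  proof -
    obtain z where z: "z \<in> quot_dom" "y = quot z" using y by blast
    then have "g (\<iota> z) \<in> V" "\<psi> (g (\<iota> z)) = y" using in_quot_dom_iff \<psi> by simp_all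
    then have "inv_into V \<psi> y = g (\<iota> z)" using chart_inverse_inv_into[OF chart_V] \<kappa>(3) by auto
    moreover have "inv_into A g (g (\<iota> z)) = \<iota> z" using inj z in_quot_dom_iff by simp
    moreover have "inv_into quot_dom quot y = z" using inj_on_quot_dom z by simp
    ultimately show ?thesis using \<iota>(2) by simp
  qed
  have opn: "open (quot ` quot_dom)" and Ck_inv: "\<And>k. Ck k (quot ` quot_dom) (inv_into quot_dom quot)"
    using Cinf_inv_quot[OF inj_on_quot_dom] by (auto simp: Cinf_on_def)
  have "Ck k (quot ` quot_dom) (\<phi> \<circ> inv_into A g \<circ> inv_into V \<psi>)" for k
    by (rule Ck_cong[OF opn Ck_inv eq])
  then show ?thesis
    using opn unfolding inverse_chart_image_eq Cinf_on_def by blast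
qed

end

section \<open>Charts of M\<close>

definition xnum :: "complex \<Rightarrow> complex \<times> complex \<Rightarrow> complex" where
  "xnum t z = fst z - snd z * t"

definition xden :: "complex \<Rightarrow> complex \<times> complex \<Rightarrow> complex" where
  "xden t z = 1 + snd z * cnj (fst z) * t"

definition ynum :: "complex \<Rightarrow> complex \<times> complex \<Rightarrow> complex" where
  "ynum t z = cnj (snd z) * fst z - t"

definition yden :: "complex \<Rightarrow> complex \<times> complex \<Rightarrow> complex" where
  "yden t z = cnj (snd z) + cnj (fst z) * t"

definition xnum' :: "complex \<Rightarrow> complex \<times> complex \<Rightarrow> complex \<times> complex \<Rightarrow> complex" where
  "xnum' t z h = fst h - snd h * t"

definition xden' :: "complex \<Rightarrow> complex \<times> complex \<Rightarrow> complex \<times> complex \<Rightarrow> complex" where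
  "xden' t z h = (snd h * cnj (fst z) + snd z * cnj (fst h)) * t"

definition ynum' :: "complex \<Rightarrow> complex \<times> complex \<Rightarrow> complex \<times> complex \<Rightarrow> complex" where
  "ynum' t z h = cnj (snd h) * fst z + cnj (snd z) * fst h"

definition yden' :: "complex \<Rightarrow> complex \<times> complex \<Rightarrow> complex \<times> complex \<Rightarrow> complex" where
  "yden' t z h = cnj (snd h) + cnj (fst h) * t"

lemmas chart1_defs = xnum_def xden_def ynum_def yden_def xnum'_def xden'_def ynum'_def yden'_def

lemma one_plus_norm_sq_ne_0: "t \<noteq> 0 \<Longrightarrow> t * (1 + w * cnj w) \<noteq> 0"
  using one_plus_sq_ne_0[of w 1] by (simp add: mult.commute)

lemma xnum_xden_nondegenerate: "xnum t z \<noteq> 0 \<or> xden t z \<noteq> 0"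
proof (rule ccontr)
  assume "\<not> ?thesis"
  then have "fst z = snd z * t" "1 + snd z * cnj (fst z) * t = 0" by (auto simp: xnum_def xden_def)
  then show False using one_plus_sq_ne_0[of "snd z" t] by (simp add: algebra_simps)
qed

lemma ynum_yden_nondegenerate:
  assumes t: "t \<noteq> 0"
  shows "ynum t z \<noteq> 0 \<or> yden t z \<noteq> 0"
proof (rule ccontr)
  obtain d a where z: "z = (d, a)" by fastforce
  assume "\<not> ?thesis"
  then have "cnj a * d = t" "cnj d * t = - cnj a" by (auto simp: z ynum_def yden_def add_eq_0_iff)
  then have "t * (1 + d * cnj d) = 0" by (simp add: algebra_simps)
  then show False using one_plus_norm_sq_ne_0[OF t] by blast
qed

definition conj_lin_solve :: "complex \<Rightarrow> complex \<Rightarrow> complex \<Rightarrow> complex" where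
  "conj_lin_solve A B q = (cnj A * q - B * cnj q) / (A * cnj A - B * cnj B)"

lemma conj_lin_solve:
  assumes "A * cnj A - B * cnj B \<noteq> 0"
  shows "A * conj_lin_solve A B q + B * cnj (conj_lin_solve A B q) = q"
proof -
  have "A * conj_lin_solve A B q + B * cnj (conj_lin_solve A B q)
     = (A * (cnj A * q - B * cnj q) + B * (A * cnj q - cnj B * q)) / (A * cnj A - B * cnj B)"
    by (simp add: conj_lin_solve_def add_divide_distrib mult.commute)
  also have "\<dots> = q" using assms by (simp add: field_simps)
  finally show ?thesis .
qed

lemma conj_lin_coeffs_nonzero:
  assumes "t \<noteq> 0" "cmod a \<noteq> 1"
  defines "A \<equiv> (1 + t * cnj t) * (cnj a)\<^sup>2 * cnj t" and "B \<equiv> (1 + t * cnj t) * t"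
  shows "A * cnj A - B * cnj B \<noteq> 0"
proof -
  have "A * cnj A - B * cnj B = (1 + t * cnj t)\<^sup>2 * (t * cnj t) * ((a * cnj a)\<^sup>2 - 1)"
    by (simp add: A_def B_def algebra_simps power2_eq_square)
  also have "\<dots> = of_real ((1 + (cmod t)\<^sup>2)\<^sup>2 * (cmod t)\<^sup>2 * ((cmod a) ^ 4 - 1))"
    by (simp add: complex_norm_square[symmetric] power_mult_distrib flip: power_mult)
  finally have eq: "A * cnj A - B * cnj B = of_real ((1 + (cmod t)\<^sup>2)\<^sup>2 * (cmod t)\<^sup>2 * ((cmod a) ^ 4 - 1))" .
  have "(cmod a) ^ 4 \<noteq> 1"
  proof
    assume "(cmod a) ^ 4 = 1"
    then have "cmod a = 1" using power_eq_1_iff[of "cmod a" 4] by simp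
    with assms(2) show False by simp
  qed
  moreover have "1 + (cmod t)\<^sup>2 > 0" by (simp add: add_pos_nonneg)
  ultimately have "(1 + (cmod t)\<^sup>2)\<^sup>2 * (cmod t)\<^sup>2 * ((cmod a) ^ 4 - 1) \<noteq> 0"
    using assms(1) by simp
  then show ?thesis using eq by (metis of_real_eq_0_iff)
qed

text \<open>The right inverse of the derivative numerator in the chart (d, a) = z: the x-equation gives
  the second coordinate k of the preimage in terms of the first, h; substituting into cnj t times
  the y-equation leaves the real-linear equation A h + B cnj h = cnj t p2 + t cnj p1.\<close>
definition W1 :: "complex \<Rightarrow> complex \<times> complex \<Rightarrow> complex \<times> complex \<Rightarrow> complex \<times> complex" where
  "W1 t z p = (let h = conj_lin_solve ((1 + t * cnj t) * (cnj (snd z))\<^sup>2 * cnj t) ((1 + t * cnj t) * t)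
                          (cnj t * snd p + t * cnj (fst p))
    in (h, (xden t z * h - snd z * t * xnum t z * cnj h - fst p) / (t * (1 + fst z * cnj (fst z)))))"

lemma W1_right_inverse:
  assumes t: "t \<noteq> 0" and a: "cmod (snd z) \<noteq> 1"
  shows "(xden t z * xnum' t z (W1 t z p) - xnum t z * xden' t z (W1 t z p),
          yden t z * ynum' t z (W1 t z p) - ynum t z * yden' t z (W1 t z p)) = p"
proof -
  obtain d a where z: "z = (d, a)" by fastforce
  obtain p1 p2 where p: "p = (p1, p2)" by fastforce
  define A B where "A = (1 + t * cnj t) * (cnj a)\<^sup>2 * cnj t" and "B = (1 + t * cnj t) * t"
  define h where "h = conj_lin_solve A B (cnj t * p2 + t * cnj p1)"
  define k where "k = (xden t z * h - a * t * xnum t z * cnj h - p1) / (t * (1 + d * cnj d))"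
  have W: "W1 t z p = (h, k)" by (simp add: W1_def Let_def h_def k_def A_def B_def z p)
  have keq: "k * (t * (1 + d * cnj d)) = xden t z * h - a * t * xnum t z * cnj h - p1"
    using one_plus_norm_sq_ne_0[OF t] by (simp add: k_def)
  have heq: "A * h + B * cnj h = cnj t * p2 + t * cnj p1"
    unfolding h_def A_def B_def using t a z by (intro conj_lin_solve conj_lin_coeffs_nonzero) auto
  have kc: "cnj k * (cnj t * (1 + cnj d * d))
      = cnj (xden t z) * cnj h - cnj a * cnj t * cnj (xnum t z) * h - cnj p1"
    using arg_cong[OF keq, of cnj] by simp
  have "xden t z * xnum' t z (h, k) - xnum t z * xden' t z (h, k)
      = xden t z * h - a * t * xnum t z * cnj h - k * (t * (1 + d * cnj d))"
    by (simp add: z chart1_defs algebra_simps)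
  moreover have "cnj t * (yden t z * ynum' t z (h, k) - ynum t z * yden' t z (h, k))
     = (A * h + B * cnj h - (cnj t * p2 + t * cnj p1))
       + t * (cnj k * (cnj t * (1 + cnj d * d))
              - (cnj (xden t z) * cnj h - cnj a * cnj t * cnj (xnum t z) * h - cnj p1))
       + cnj t * p2"
    by (simp add: z chart1_defs A_def B_def algebra_simps power2_eq_square)
  ultimately show ?thesis using keq heq kc t unfolding W by (simp add: p)
qed

lemma frac_chart_chart1:
  assumes t: "t \<noteq> 0" and R: "open R" "R \<subseteq> {z. cmod (snd z) \<noteq> 1}"
  shows "frac_chart (xnum t) (xden t) (ynum t) (yden t) (xnum' t) (xden' t) (ynum' t) (yden' t) (W1 t) R"
proof
  show "Cinf_on UNIV (xnum t)" "Cinf_on UNIV (xden t)" "Cinf_on UNIV (ynum t)" "Cinf_on UNIV (yden t)"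
    unfolding Cinf_on_def chart1_defs by (auto intro!: Ck_intros)
  show "(xnum t has_derivative xnum' t z) (at z)" "(xden t has_derivative xden' t z) (at z)"
    "(ynum t has_derivative ynum' t z) (at z)" "(yden t has_derivative yden' t z) (at z)" for z
    unfolding chart1_defs by (auto intro!: derivative_eq_intros simp: algebra_simps)
  have "Ck k (R \<times> UNIV) (\<lambda>x. W1 t (fst x) (snd x))" for k
    unfolding W1_def Let_def conj_lin_solve_def chart1_defs
    using conj_lin_coeffs_nonzero[OF t] one_plus_norm_sq_ne_0[OF t] R
    by (intro Ck_intros open_Times open_UNIV R(1)) auto
  then show "Cinf_on (R \<times> UNIV) (\<lambda>x. W1 t (fst x) (snd x))"
    using R(1) by (simp add: Cinf_on_def open_Times)
qed (use W1_right_inverse[OF t] R in auto)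

definition srecip :: "sphere \<Rightarrow> sphere" where
  "srecip p = (case p of None \<Rightarrow> Some 0 | Some z \<Rightarrow> inv_pt z)"

lemma srecip_pfrac: "n \<noteq> 0 \<or> d \<noteq> 0 \<Longrightarrow> srecip (pfrac n d) = pfrac d n"
  by (auto simp: srecip_def pfrac_def inv_pt_def)

lemma srecip_proj: "v \<noteq> 0 \<Longrightarrow> srecip (proj v) = proj (snd v, fst v)"
  by (cases v) (simp add: proj_def srecip_pfrac zero_prod_def)

lemma twist_inv_pt: "twist (inv_pt w) = (if w = 0 then 1 else w / cnj w)"
  by (simp add: twist_def inv_pt_def)

lemma cnj_twist_inv_pt: "cnj (twist (inv_pt w)) = 1 / twist (inv_pt w)"
  by (simp add: twist_inv_pt)

lemma twist_inv_pt_nonzero: "twist (inv_pt w) \<noteq> 0"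
  by (simp add: twist_inv_pt)

text \<open>The chart 1/d near d = \<infinity> turns into the chart near d = 0 after inverting both
  coordinates of X_t.\<close>
lemma uM_inv_pt_twist:
  assumes t: "t \<noteq> 0"
  shows "uM t (inv_pt w, Some (- a / twist (inv_pt w))) = map_prod srecip srecip (uM t (Some w, Some a))"
proof -
  define c c' where "c = (if w = 0 then - 1 else 1 / w)" and "c' = (if w = 0 then 1 else - 1 / cnj w)"
  have "xvec t (inv_pt w) (- a / twist (inv_pt w)) = cscale c (prod.swap (xvec t (Some w) a))"
    "yvec t (inv_pt w) (- a / twist (inv_pt w)) = cscale c' (prod.swap (yvec t (Some w) a))"
    by (auto simp: c_def c'_def inv_pt_def twist_def xvec_Some xvec_None yvec_Some yvec_None
        cscale_def field_simps)
  moreover have "c \<noteq> 0" "c' \<noteq> 0" by (simp_all add: c_def c'_def)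
  moreover have "prod.swap v \<noteq> 0 \<longleftrightarrow> v \<noteq> 0" for v :: "complex \<times> complex"
    by (cases v) (auto simp: zero_prod_def)
  ultimately show ?thesis
    using xvec_nonzero yvec_nonzero[OF t]
    by (simp add: uM_eq_proj[OF t] proj_cscale srecip_proj prod.swap_def)
qed

definition conj_snd :: "complex \<times> complex \<Rightarrow> complex \<times> complex" where
  "conj_snd z = (fst z, cnj (snd z))"

definition neg_snd :: "complex \<times> complex \<Rightarrow> complex \<times> complex" where
  "neg_snd z = (fst z, - snd z)"

lemma bounded_linear_conj_snd: "bounded_linear conj_snd"
  and bounded_linear_neg_snd: "bounded_linear neg_snd"
  unfolding conj_snd_def neg_snd_def
  by (auto intro!: bounded_linear_Pair bounded_linear_compose[OF bounded_linear_cnj]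
      bounded_linear_minus bounded_linear_fst bounded_linear_snd)

lemma conj_snd_conj_snd [simp]: "conj_snd (conj_snd z) = z"
  and neg_snd_neg_snd [simp]: "neg_snd (neg_snd z) = z"
  by (simp_all add: conj_snd_def neg_snd_def)

definition mchart_inv1 :: "complex \<times> complex \<Rightarrow> param" where
  "mchart_inv1 z = (Some (fst z), Some (snd z))"

definition mchart_inv2 :: "complex \<times> complex \<Rightarrow> param" where
  "mchart_inv2 z = (Some (fst z), inv_pt (snd z))"

definition mchart_inv3 :: "complex \<times> complex \<Rightarrow> param" where
  "mchart_inv3 z = (inv_pt (fst z), Some (snd z / twist (inv_pt (fst z))))"

definition mchart_inv4 :: "complex \<times> complex \<Rightarrow> param" where
  "mchart_inv4 z = (inv_pt (fst z), inv_pt (snd z * twist (inv_pt (fst z))))"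

lemma uM_mchart_inv1: "t \<noteq> 0 \<Longrightarrow>
    uM t (mchart_inv1 z) = (pfrac (xnum t z) (xden t z), pfrac (ynum t z) (yden t z))"
  by (simp add: mchart_inv1_def uM_eq_proj proj_def xvec_Some yvec_Some chart1_defs algebra_simps)

lemma uM_mchart_inv2: "t \<noteq> 0 \<Longrightarrow> uM t (mchart_inv2 z) = prod.swap (uM t (mchart_inv1 (conj_snd z)))"
  by (simp add: mchart_inv1_def mchart_inv2_def conj_snd_def uM_inv_pt)

lemma uM_mchart_inv3: "t \<noteq> 0 \<Longrightarrow> uM t (mchart_inv3 z) = map_prod srecip srecip (uM t (mchart_inv1 (neg_snd z)))"
  using uM_inv_pt_twist[of t "fst z" "- snd z"] by (simp add: mchart_inv1_def mchart_inv3_def neg_snd_def)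

lemma uM_mchart_inv4: "t \<noteq> 0 \<Longrightarrow> uM t (mchart_inv4 z) = prod.swap (uM t (mchart_inv3 (conj_snd z)))"
  using cnj_twist_inv_pt[of "fst z"]
  by (simp add: mchart_inv3_def mchart_inv4_def conj_snd_def uM_inv_pt divide_inverse)

lemma chart_inverse_mchart_inv1:
  "chart_inverse {(Some d, Some a) | d a. True} (\<lambda>(p, q). (the p, the q)) mchart_inv1"
  by (auto simp: chart_inverse_def mchart_inv1_def)

lemma chart_inverse_mchart_inv2:
  "chart_inverse {(Some d, q) | d q. q \<noteq> Some 0} (\<lambda>(p, q). (the p, pinv q)) mchart_inv2"
  by (auto simp: chart_inverse_def mchart_inv2_def inv_pt_pinv)

lemma twist_nonzero: "p \<noteq> Some 0 \<Longrightarrow> twist p \<noteq> 0"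
  by (cases p) (auto simp: twist_def)

lemma chart_inverse_mchart_inv3:
  "chart_inverse {(p, Some a) | p a. p \<noteq> Some 0} (\<lambda>(p, q). (pinv p, the q * twist p)) mchart_inv3"
  by (auto simp: chart_inverse_def mchart_inv3_def inv_pt_pinv twist_nonzero twist_inv_pt_nonzero)

lemma chart_inverse_mchart_inv4:
  "chart_inverse {(p, q) | p q. p \<noteq> Some 0 \<and> q \<noteq> Some 0} (\<lambda>(p, q). (pinv p, pinv q / twist p)) mchart_inv4"
  by (auto simp: chart_inverse_def mchart_inv4_def inv_pt_pinv twist_nonzero twist_inv_pt_nonzero)

text \<open>Each chart of X_atlas is the coordinate n / d or its reciprocal on each factor: the flags e1
  and e2 record which.\<close>
lemma X_atlas_chart:
  assumes "(V, \<psi>) \<in> X_atlas"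
  obtains \<kappa> e1 e2 where "chart_inverse V \<psi> \<kappa>"
    and "\<And>n1 d1 n2 d2. n1 \<noteq> 0 \<or> d1 \<noteq> 0 \<Longrightarrow> n2 \<noteq> 0 \<or> d2 \<noteq> 0 \<Longrightarrow>
      (pfrac n1 d1, pfrac n2 d2) \<in> V \<longleftrightarrow> (if e1 then n1 else d1) \<noteq> 0 \<and> (if e2 then n2 else d2) \<noteq> 0"
    and "\<And>n1 d1 n2 d2. n1 \<noteq> 0 \<or> d1 \<noteq> 0 \<Longrightarrow> n2 \<noteq> 0 \<or> d2 \<noteq> 0 \<Longrightarrow> (pfrac n1 d1, pfrac n2 d2) \<in> V \<Longrightarrow>
      \<psi> (pfrac n1 d1, pfrac n2 d2) = ((if e1 then d1 else n1) / (if e1 then n1 else d1),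
        (if e2 then d2 else n2) / (if e2 then n2 else d2))"
proof -
  from assms consider
      "V = {(Some x, Some y) | x y. True}" "\<psi> = (\<lambda>(p, q). (the p, the q))"
    | "V = {(p, Some y) | p y. p \<noteq> Some 0}" "\<psi> = (\<lambda>(p, q). (pinv p, the q))"
    | "V = {(Some x, q) | x q. q \<noteq> Some 0}" "\<psi> = (\<lambda>(p, q). (the p, pinv q))"
    | "V = {(p, q) | p q. p \<noteq> Some 0 \<and> q \<noteq> Some 0}" "\<psi> = (\<lambda>(p, q). (pinv p, pinv q))"
    unfolding X_atlas_def by blast
  then show ?thesis
  proof cases
    case 1
    show ?thesis
      by (rule that[of "\<lambda>z. (Some (fst z), Some (snd z))" False False])
        (auto simp: 1 chart_inverse_def pfrac_def)
  next
    case 2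
    show ?thesis
      by (rule that[of "\<lambda>z. (inv_pt (fst z), Some (snd z))" True False])
        (auto simp: 2 chart_inverse_def inv_pt_pinv, auto simp: pfrac_def pinv_def split: if_splits)
  next
    case 3
    show ?thesis
      by (rule that[of "\<lambda>z. (Some (fst z), inv_pt (snd z))" False True])
        (auto simp: 3 chart_inverse_def inv_pt_pinv, auto simp: pfrac_def pinv_def split: if_splits)
  next
    case 4
    show ?thesis
      by (rule that[of "\<lambda>z. (inv_pt (fst z), inv_pt (snd z))" True True])
        (auto simp: 4 chart_inverse_def inv_pt_pinv, auto simp: pfrac_def pinv_def split: if_splits)
  qed
qed

definition X_transitions ::
  "('m \<Rightarrow> sphere \<times> sphere) \<Rightarrow> 'm set \<Rightarrow> 'm set \<Rightarrow> ('m \<Rightarrow> complex \<times> complex) \<Rightarrow> bool" where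
  "X_transitions g A U \<phi> \<longleftrightarrow> (\<forall>V \<psi>. (V, \<psi>) \<in> X_atlas \<longrightarrow>
      Cinf_on (\<phi> ` (A \<inter> U \<inter> g -` V)) (\<psi> \<circ> g \<circ> inv_into U \<phi>)
    \<and> Cinf_on (\<psi> ` (g ` A \<inter> V \<inter> inv_into A g -` U)) (\<phi> \<circ> inv_into A g \<circ> inv_into V \<psi>))"

lemma frac_chart_X_transitions:
  assumes "frac_chart N1 D1 N2 D2 N1' D1' N2' D2' W R"
    and \<iota>: "chart_inverse U \<phi> \<iota>" and A: "\<And>z. \<iota> z \<in> A \<longleftrightarrow> z \<in> R"
    and g: "\<And>z. g (\<iota> z) = (pfrac (N1 z) (D1 z), pfrac (N2 z) (D2 z))"
    and nd: "\<And>z. N1 z \<noteq> 0 \<or> D1 z \<noteq> 0" "\<And>z. N2 z \<noteq> 0 \<or> D2 z \<noteq> 0"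
    and inj: "inj_on g A"
  shows "X_transitions g A U \<phi>"
  unfolding X_transitions_def
proof (intro allI impI)
  fix V \<psi> assume X: "(V, \<psi>) \<in> X_atlas"
  show "Cinf_on (\<phi> ` (A \<inter> U \<inter> g -` V)) (\<psi> \<circ> g \<circ> inv_into U \<phi>)
    \<and> Cinf_on (\<psi> ` (g ` A \<inter> V \<inter> inv_into A g -` U)) (\<phi> \<circ> inv_into A g \<circ> inv_into V \<psi>)"
  proof (rule X_atlas_chart[OF X])
    fix \<kappa> e1 e2 assume \<kappa>: "chart_inverse V \<psi> \<kappa>"
      and V: "\<And>n1 d1 n2 d2. n1 \<noteq> 0 \<or> d1 \<noteq> 0 \<Longrightarrow> n2 \<noteq> 0 \<or> d2 \<noteq> 0 \<Longrightarrow>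
        (pfrac n1 d1, pfrac n2 d2) \<in> V \<longleftrightarrow> (if e1 then n1 else d1) \<noteq> 0 \<and> (if e2 then n2 else d2) \<noteq> 0"
      and \<psi>: "\<And>n1 d1 n2 d2. n1 \<noteq> 0 \<or> d1 \<noteq> 0 \<Longrightarrow> n2 \<noteq> 0 \<or> d2 \<noteq> 0 \<Longrightarrow> (pfrac n1 d1, pfrac n2 d2) \<in> V \<Longrightarrow>
        \<psi> (pfrac n1 d1, pfrac n2 d2) = ((if e1 then d1 else n1) / (if e1 then n1 else d1),
          (if e2 then d2 else n2) / (if e2 then n2 else d2))"
    interpret oriented: frac_chart "if e1 then D1 else N1" "if e1 then N1 else D1"
      "if e2 then D2 else N2" "if e2 then N2 else D2"
      "if e1 then D1' else N1'" "if e1 then N1' else D1'" "if e2 then D2' else N2'" "if e2 then N2' else D2'"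
      "\<lambda>z p. W z ((if e1 then - 1 else 1) * fst p, (if e2 then - 1 else 1) * snd p)" R
      by (rule frac_chart_orient[OF assms(1)])
    have "g (\<iota> z) \<in> V \<longleftrightarrow> (if e1 then N1 else D1) z \<noteq> 0 \<and> (if e2 then N2 else D2) z \<noteq> 0" for z
      using V[OF nd(1)[of z] nd(2)[of z]] by (cases e1; cases e2) (simp_all add: g)
    moreover have "\<psi> (g (\<iota> z)) = oriented.quot z" if "g (\<iota> z) \<in> V" for z
      using \<psi>[OF nd(1)[of z] nd(2)[of z]] that unfolding oriented.quot_def
      by (cases e1; cases e2) (simp_all add: g)
    ultimately interpret frac_chart_map "if e1 then D1 else N1" "if e1 then N1 else D1"
      "if e2 then D2 else N2" "if e2 then N2 else D2"
      "if e1 then D1' else N1'" "if e1 then N1' else D1'" "if e2 then D2' else N2'" "if e2 then N2' else D2'"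
      "\<lambda>z p. W z ((if e1 then - 1 else 1) * fst p, (if e2 then - 1 else 1) * snd p)" R U \<phi> \<iota> V \<psi> \<kappa> A g
      using \<iota> \<kappa> A inj by unfold_locales auto
    show ?thesis using Cinf_chart_map Cinf_inverse_chart_map by blast
  qed
qed

lemma X_transitions_mchart_inv1:
  assumes t: "t \<noteq> 0" and inj: "inj_on (uM t) A" and R: "open R" "R \<subseteq> {z. cmod (snd z) \<noteq> 1}"
    and A: "\<And>z. mchart_inv1 z \<in> A \<longleftrightarrow> z \<in> R"
  shows "X_transitions (uM t) A {(Some d, Some a) | d a. True} (\<lambda>(p, q). (the p, the q))"
  by (rule frac_chart_X_transitions[OF frac_chart_chart1[OF t R] chart_inverse_mchart_inv1 A _ _ _ inj])
    (use xnum_xden_nondegenerate[of t] ynum_yden_nondegenerate[OF t] in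
      \<open>simp_all add: uM_mchart_inv1[OF t]\<close>)

lemma X_transitions_mchart_inv2:
  assumes t: "t \<noteq> 0" and inj: "inj_on (uM t) A" and R: "open R" "R \<subseteq> {z. cmod (snd z) \<noteq> 1}"
    and A: "\<And>z. mchart_inv2 z \<in> A \<longleftrightarrow> z \<in> conj_snd -` R"
  shows "X_transitions (uM t) A {(Some d, q) | d q. q \<noteq> Some 0} (\<lambda>(p, q). (the p, pinv q))"
  by (rule frac_chart_X_transitions[OF frac_chart_linear[OF frac_chart_swap[OF frac_chart_chart1[OF t R]]
        bounded_linear_conj_snd conj_snd_conj_snd] chart_inverse_mchart_inv2 A _ _ _ inj])
    (use xnum_xden_nondegenerate[of t] ynum_yden_nondegenerate[OF t] in
      \<open>simp_all add: uM_mchart_inv2[OF t] uM_mchart_inv1[OF t]\<close>)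

lemma frac_chart_chart3:
  assumes t: "t \<noteq> 0" and R: "open R" "R \<subseteq> {z. cmod (snd z) \<noteq> 1}"
  shows "frac_chart (xden t \<circ> neg_snd) (xnum t \<circ> neg_snd) (yden t \<circ> neg_snd) (ynum t \<circ> neg_snd)
    (\<lambda>z h. xden' t (neg_snd z) (neg_snd h)) (\<lambda>z h. xnum' t (neg_snd z) (neg_snd h))
    (\<lambda>z h. yden' t (neg_snd z) (neg_snd h)) (\<lambda>z h. ynum' t (neg_snd z) (neg_snd h))
    (\<lambda>z p. neg_snd (W1 t (neg_snd z) (- fst p, - snd p))) (neg_snd -` R)"
proof -
  have "frac_chart (xden t) (xnum t) (yden t) (ynum t) (xden' t) (xnum' t) (yden' t) (ynum' t)
      (\<lambda>z p. W1 t z (- fst p, - snd p)) R"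
    using frac_chart_orient[OF frac_chart_chart1[OF t R], of True True] by simp
  then show ?thesis by (rule frac_chart_linear[OF _ bounded_linear_neg_snd neg_snd_neg_snd])
qed

lemma X_transitions_mchart_inv3:
  assumes t: "t \<noteq> 0" and inj: "inj_on (uM t) A" and R: "open R" "R \<subseteq> {z. cmod (snd z) \<noteq> 1}"
    and A: "\<And>z. mchart_inv3 z \<in> A \<longleftrightarrow> z \<in> neg_snd -` R"
  shows "X_transitions (uM t) A {(p, Some a) | p a. p \<noteq> Some 0} (\<lambda>(p, q). (pinv p, the q * twist p))"
  by (rule frac_chart_X_transitions[OF frac_chart_chart3[OF t R] chart_inverse_mchart_inv3 A _ _ _ inj])
    (use xnum_xden_nondegenerate[of t] ynum_yden_nondegenerate[OF t] in
      \<open>simp_all add: uM_mchart_inv3[OF t] uM_mchart_inv1[OF t] srecip_pfrac disj_commute\<close>)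

lemma X_transitions_mchart_inv4:
  assumes t: "t \<noteq> 0" and inj: "inj_on (uM t) A" and R: "open R" "R \<subseteq> {z. cmod (snd z) \<noteq> 1}"
    and A: "\<And>z. mchart_inv4 z \<in> A \<longleftrightarrow> z \<in> conj_snd -` neg_snd -` R"
  shows "X_transitions (uM t) A {(p, q) | p q. p \<noteq> Some 0 \<and> q \<noteq> Some 0}
    (\<lambda>(p, q). (pinv p, pinv q / twist p))"
  by (rule frac_chart_X_transitions[OF frac_chart_linear[OF frac_chart_swap[OF frac_chart_chart3[OF t R]]
        bounded_linear_conj_snd conj_snd_conj_snd] chart_inverse_mchart_inv4 A _ _ _ inj])
    (use xnum_xden_nondegenerate[of t] ynum_yden_nondegenerate[OF t] in
      \<open>simp_all add: uM_mchart_inv4[OF t] uM_mchart_inv3[OF t] uM_mchart_inv1[OF t] srecip_pfrac disj_commute\<close>)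

lemma smooth_map_uM:
  assumes t: "t \<noteq> 0" and inj: "inj_on (uM t) A"
    and R: "open R" "R \<subseteq> {z. cmod (snd z) \<noteq> 1}" and R': "open R'" "R' \<subseteq> {z. cmod (snd z) \<noteq> 1}"
    and A: "\<And>z. mchart_inv1 z \<in> A \<longleftrightarrow> z \<in> R" "\<And>z. mchart_inv2 z \<in> A \<longleftrightarrow> z \<in> conj_snd -` R'"
      "\<And>z. mchart_inv3 z \<in> A \<longleftrightarrow> z \<in> neg_snd -` R" "\<And>z. mchart_inv4 z \<in> A \<longleftrightarrow> z \<in> conj_snd -` neg_snd -` R'"
  shows "smooth_map M_atlas X_atlas A (uM t) \<and> smooth_map X_atlas M_atlas (uM t ` A) (inv_into A (uM t))"
  using X_transitions_mchart_inv1[OF t inj R A(1)] X_transitions_mchart_inv2[OF t inj R' A(2)]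
    X_transitions_mchart_inv3[OF t inj R A(3)] X_transitions_mchart_inv4[OF t inj R' A(4)]
  unfolding smooth_map_def M_atlas_def X_transitions_def by auto

lemma norm_twist_inv_pt: "cmod (twist (inv_pt w)) = 1"
  by (simp add: twist_inv_pt norm_divide)

lemma mchart_in_Mplus_iff:
  "mchart_inv1 z \<in> Mplus \<longleftrightarrow> cmod (snd z) < 1" "mchart_inv2 z \<in> Mplus \<longleftrightarrow> 1 < cmod (snd z)"
  "mchart_inv3 z \<in> Mplus \<longleftrightarrow> cmod (snd z) < 1" "mchart_inv4 z \<in> Mplus \<longleftrightarrow> 1 < cmod (snd z)"
  and mchart_in_Mminus_iff:
  "mchart_inv1 z \<in> Mminus \<longleftrightarrow> 1 < cmod (snd z)" "mchart_inv2 z \<in> Mminus \<longleftrightarrow> cmod (snd z) < 1"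
  "mchart_inv3 z \<in> Mminus \<longleftrightarrow> 1 < cmod (snd z)" "mchart_inv4 z \<in> Mminus \<longleftrightarrow> cmod (snd z) < 1"
  using norm_twist_inv_pt[of "fst z"] twist_inv_pt_nonzero[of "fst z"]
  by (auto simp: mchart_inv1_def mchart_inv2_def mchart_inv3_def mchart_inv4_def Mplus_def Mminus_def inv_pt_def
      norm_mult norm_divide divide_less_eq less_divide_eq)

theorem lemma2p4:
  fixes t :: complex
  assumes "t \<noteq> 0"
  shows "surj (uM t)
    \<and> uM t ` Kset = Diag \<and> uM t -` Diag = Kset
    \<and> diffeo_onto M_atlas X_atlas Mplus (UNIV - Diag) (uM t)
    \<and> diffeo_onto M_atlas X_atlas Mminus (UNIV - Diag) (uM t)"
proof -
  note t = assms
  define inner outer where "inner = {z :: complex \<times> complex. cmod (snd z) < 1}"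
    and "outer = {z :: complex \<times> complex. 1 < cmod (snd z)}"
  have R: "open inner" "inner \<subseteq> {z. cmod (snd z) \<noteq> 1}" "open outer" "outer \<subseteq> {z. cmod (snd z) \<noteq> 1}"
    unfolding inner_def outer_def by (auto intro!: open_Collect_less continuous_intros)
  have "smooth_map M_atlas X_atlas Mplus (uM t) \<and> smooth_map X_atlas M_atlas (uM t ` Mplus) (inv_into Mplus (uM t))"
    by (rule smooth_map_uM[OF t inj_on_uM_Mplus[OF t] R])
      (simp_all add: mchart_in_Mplus_iff inner_def outer_def conj_snd_def neg_snd_def)
  moreover have "smooth_map M_atlas X_atlas Mminus (uM t) \<and> smooth_map X_atlas M_atlas (uM t ` Mminus) (inv_into Mminus (uM t))"
    using bij_betw_uM_Mminus[OF t] unfolding bij_betw_def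
    by (rule smooth_map_uM[OF t conjunct1 R(3,4,1,2)])
      (simp_all add: mchart_in_Mminus_iff inner_def outer_def conj_snd_def neg_snd_def)
  ultimately show ?thesis
    using surj_uM[OF t] bij_betw_uM_Mplus[OF t] bij_betw_uM_Mminus[OF t] uM_image_Kset[OF t]
      uM_vimage_Diag[OF t]
    by (auto simp: diffeo_onto_def bij_betw_def)
qed

end
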